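(* Let $\mathfrak g=\mathfrak g_{-1}\oplus\mathfrak g_0\oplus\mathfrak g_1$ be a complex Lie superalgebra with $\dim\mathfrak g_{\bar1}<\infty$ and compatible $\mathbb Z$-grading, and let $M$ be a simple $\mathfrak g$-supermodule. Then there is a simple $\mathfrak g_0$-supermodule $N$ such that $M$ embeds into $\mathrm{Coind}_{\mathfrak g_{\geq0}}^{\mathfrak g}(N)$.
   Context: Compatible grading: $\mathfrak g_0=\mathfrak g_{\bar0}$, $\mathfrak g_{\bar1}=\mathfrak g_{-1}\oplus\mathfrak g_1$, $\mathfrak g_{\pm1}$ $\mathfrak g_0$-submodules, $[\mathfrak g_{\pm1},\mathfrak g_{\pm1}]=0$; $\mathfrak g_{\geq0}=\mathfrak g_0\oplus\mathfrak g_1$. Homomorphisms are even. $\mathrm{Coind}_{\mathfrak g_{\geq0}}^{\mathfrak g}(N)=\{f\in\mathrm{Hom}_{\mathbb C}(U(\mathfrak g),N)\mid f(pu)=pf(u)\ \forall p\in U(\mathfrak g_{\geq0})\}$ with $(xf)(u)=f(ux)$, where $\mathfrak g_1$ acts on $N$ by zero. *)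

theory Defs
  imports Complex_Main
begin

record 'a cvs =
  vcarrier :: "'a set"
  vadd :: "'a \<Rightarrow> 'a \<Rightarrow> 'a"
  vsmult :: "complex \<Rightarrow> 'a \<Rightarrow> 'a"
  vzero :: 'a

definition cvs :: "('a, 'b) cvs_scheme \<Rightarrow> bool" where
  "cvs V \<longleftrightarrow>
     vzero V \<in> vcarrier V \<and>
     (\<forall>x\<in>vcarrier V. \<forall>y\<in>vcarrier V. vadd V x y \<in> vcarrier V) \<and>
     (\<forall>a. \<forall>x\<in>vcarrier V. vsmult V a x \<in> vcarrier V) \<and>
     (\<forall>x\<in>vcarrier V. \<forall>y\<in>vcarrier V. \<forall>z\<in>vcarrier V.
         vadd V (vadd V x y) z = vadd V x (vadd V y z)) \<and>
     (\<forall>x\<in>vcarrier V. \<forall>y\<in>vcarrier V. vadd V x y = vadd V y x) \<and>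
     (\<forall>x\<in>vcarrier V. vadd V (vzero V) x = x) \<and>
     (\<forall>x\<in>vcarrier V. \<exists>y\<in>vcarrier V. vadd V x y = vzero V) \<and>
     (\<forall>a. \<forall>x\<in>vcarrier V. \<forall>y\<in>vcarrier V.
         vsmult V a (vadd V x y) = vadd V (vsmult V a x) (vsmult V a y)) \<and>
     (\<forall>a b. \<forall>x\<in>vcarrier V. vsmult V (a + b) x = vadd V (vsmult V a x) (vsmult V b x)) \<and>
     (\<forall>a b. \<forall>x\<in>vcarrier V. vsmult V (a * b) x = vsmult V a (vsmult V b x)) \<and>
     (\<forall>x\<in>vcarrier V. vsmult V 1 x = x)"

definition csubspace :: "('a, 'b) cvs_scheme \<Rightarrow> 'a set \<Rightarrow> bool" where
  "csubspace V S \<longleftrightarrow> S \<subseteq> vcarrier V \<and> vzero V \<in> S \<and>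
     (\<forall>x\<in>S. \<forall>y\<in>S. vadd V x y \<in> S) \<and> (\<forall>a. \<forall>x\<in>S. vsmult V a x \<in> S)"

definition ssum :: "('a, 'b) cvs_scheme \<Rightarrow> 'a set \<Rightarrow> 'a set \<Rightarrow> 'a set" where
  "ssum V S T = {vadd V a b | a b. a \<in> S \<and> b \<in> T}"

definition dsum :: "('a, 'b) cvs_scheme \<Rightarrow> 'a set \<Rightarrow> 'a set \<Rightarrow> 'a set \<Rightarrow> bool" where
  "dsum V S T U \<longleftrightarrow> csubspace V S \<and> csubspace V T \<and>
     (\<forall>x\<in>U. \<exists>!p. fst p \<in> S \<and> snd p \<in> T \<and> x = vadd V (fst p) (snd p)) \<and>
     ssum V S T \<subseteq> U"

definition lincomb :: "('a, 'b) cvs_scheme \<Rightarrow> (complex \<times> 'a) list \<Rightarrow> 'a" where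
  "lincomb V xs = foldr (\<lambda>(c, x) acc. vadd V (vsmult V c x) acc) xs (vzero V)"

definition fin_dim :: "('a, 'b) cvs_scheme \<Rightarrow> 'a set \<Rightarrow> bool" where
  "fin_dim V S \<longleftrightarrow> (\<exists>bs. set bs \<subseteq> S \<and>
     (\<forall>x\<in>S. \<exists>cs. length cs = length bs \<and> x = lincomb V (zip cs bs)))"

text \<open>Parities are booleans (True = odd).  \<open>hpart Ev Od p\<close> is the homogeneous part
  of parity \<open>p\<close>; \<open>ssgn p q = (-1)^(p q)\<close>.\<close>
definition hpart :: "'a set \<Rightarrow> 'a set \<Rightarrow> bool \<Rightarrow> 'a set" where
  "hpart Ev Od p = (if p then Od else Ev)"

definition ssgn :: "bool \<Rightarrow> bool \<Rightarrow> complex" where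
  "ssgn p q = (if p \<and> q then -1 else 1)"

definition lie_salg :: "'g cvs \<Rightarrow> ('g \<Rightarrow> 'g \<Rightarrow> 'g) \<Rightarrow> 'g set \<Rightarrow> 'g set \<Rightarrow> bool" where
  "lie_salg G br Ev Od \<longleftrightarrow> cvs G \<and> dsum G Ev Od (vcarrier G) \<and>
     (\<forall>x\<in>vcarrier G. \<forall>y\<in>vcarrier G. br x y \<in> vcarrier G) \<and>
     (\<forall>a b. \<forall>x\<in>vcarrier G. \<forall>y\<in>vcarrier G. \<forall>z\<in>vcarrier G.
        br (vadd G (vsmult G a x) (vsmult G b y)) z = vadd G (vsmult G a (br x z)) (vsmult G b (br y z)) \<and>
        br z (vadd G (vsmult G a x) (vsmult G b y)) = vadd G (vsmult G a (br z x)) (vsmult G b (br z y))) \<and>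
     (\<forall>p q x y. x \<in> hpart Ev Od p \<longrightarrow> y \<in> hpart Ev Od q \<longrightarrow> br x y \<in> hpart Ev Od (p \<noteq> q)) \<and>
     (\<forall>p q x y. x \<in> hpart Ev Od p \<longrightarrow> y \<in> hpart Ev Od q \<longrightarrow>
        br x y = vsmult G (- ssgn p q) (br y x)) \<and>
     (\<forall>p q r x y z. x \<in> hpart Ev Od p \<longrightarrow> y \<in> hpart Ev Od q \<longrightarrow> z \<in> hpart Ev Od r \<longrightarrow>
        br x (br y z) = vadd G (br (br x y) z) (vsmult G (ssgn p q) (br y (br x z))))"

text \<open>Complex Lie superalgebra \<open>g = g_{-1} \<oplus> g_0 \<oplus> g_1\<close> with compatible \<open>\<int>\<close>-grading:
  \<open>g_0\<close> is the even part, the odd part is \<open>g_{-1} \<oplus> g_1\<close>, \<open>g_{\<pm>1}\<close> are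
  \<open>g_0\<close>-submodules and \<open>[g_{\<pm>1}, g_{\<pm>1}] = 0\<close>.\<close>
definition zgraded_lsa ::
  "'g cvs \<Rightarrow> ('g \<Rightarrow> 'g \<Rightarrow> 'g) \<Rightarrow> 'g set \<Rightarrow> 'g set \<Rightarrow> 'g set \<Rightarrow> bool" where
  "zgraded_lsa G br gm g0 gp \<longleftrightarrow>
     lie_salg G br g0 (ssum G gm gp) \<and> dsum G gm gp (ssum G gm gp) \<and>
     (\<forall>x\<in>g0. \<forall>y\<in>gm. br x y \<in> gm) \<and> (\<forall>x\<in>g0. \<forall>y\<in>gp. br x y \<in> gp) \<and>
     (\<forall>x\<in>gm. \<forall>y\<in>gm. br x y = vzero G) \<and> (\<forall>x\<in>gp. \<forall>y\<in>gp. br x y = vzero G)"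

record ('a, 'g) smod = "'a cvs" +
  spar0 :: "'a set"
  spar1 :: "'a set"
  sact :: "'g \<Rightarrow> 'a \<Rightarrow> 'a"

text \<open>\<open>V\<close> is a supermodule over the Lie sub-superalgebra of \<open>G\<close> with even part \<open>Ev\<close>
  and odd part \<open>Od\<close> (the acting algebra is \<open>Ev \<oplus> Od\<close>).\<close>
definition smod :: "'g cvs \<Rightarrow> ('g \<Rightarrow> 'g \<Rightarrow> 'g) \<Rightarrow> 'g set \<Rightarrow> 'g set \<Rightarrow> ('a, 'g) smod \<Rightarrow> bool" where
  "smod G br Ev Od V \<longleftrightarrow> cvs V \<and> dsum V (spar0 V) (spar1 V) (vcarrier V) \<and>
     (\<forall>x\<in>ssum G Ev Od. \<forall>v\<in>vcarrier V. sact V x v \<in> vcarrier V) \<and>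
     (\<forall>x\<in>ssum G Ev Od. \<forall>a b. \<forall>v\<in>vcarrier V. \<forall>w\<in>vcarrier V.
        sact V x (vadd V (vsmult V a v) (vsmult V b w)) =
        vadd V (vsmult V a (sact V x v)) (vsmult V b (sact V x w))) \<and>
     (\<forall>x\<in>ssum G Ev Od. \<forall>y\<in>ssum G Ev Od. \<forall>a b. \<forall>v\<in>vcarrier V.
        sact V (vadd G (vsmult G a x) (vsmult G b y)) v =
        vadd V (vsmult V a (sact V x v)) (vsmult V b (sact V y v))) \<and>
     (\<forall>p q x v. x \<in> hpart Ev Od p \<longrightarrow> v \<in> hpart (spar0 V) (spar1 V) q \<longrightarrow>
        sact V x v \<in> hpart (spar0 V) (spar1 V) (p \<noteq> q)) \<and>
     (\<forall>p q x y. \<forall>v\<in>vcarrier V. x \<in> hpart Ev Od p \<longrightarrow> y \<in> hpart Ev Od q \<longrightarrow>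
        sact V (br x y) v =
        vadd V (sact V x (sact V y v)) (vsmult V (- ssgn p q) (sact V y (sact V x v))))"

definition sub_smod :: "'g cvs \<Rightarrow> 'g set \<Rightarrow> 'g set \<Rightarrow> ('a, 'g) smod \<Rightarrow> 'a set \<Rightarrow> bool" where
  "sub_smod G Ev Od V W \<longleftrightarrow> csubspace V W \<and>
     (\<forall>w\<in>W. \<forall>a b. a \<in> spar0 V \<longrightarrow> b \<in> spar1 V \<longrightarrow> w = vadd V a b \<longrightarrow> a \<in> W \<and> b \<in> W) \<and>
     (\<forall>x\<in>ssum G Ev Od. \<forall>w\<in>W. sact V x w \<in> W)"

definition simple_smod ::
  "'g cvs \<Rightarrow> ('g \<Rightarrow> 'g \<Rightarrow> 'g) \<Rightarrow> 'g set \<Rightarrow> 'g set \<Rightarrow> ('a, 'g) smod \<Rightarrow> bool" where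
  "simple_smod G br Ev Od V \<longleftrightarrow> smod G br Ev Od V \<and> vcarrier V \<noteq> {vzero V} \<and>
     (\<forall>W. sub_smod G Ev Od V W \<longrightarrow> W = {vzero V} \<or> W = vcarrier V)"

definition smod_hom ::
  "'g cvs \<Rightarrow> 'g set \<Rightarrow> 'g set \<Rightarrow> ('a, 'g) smod \<Rightarrow> ('b, 'g) smod \<Rightarrow> ('a \<Rightarrow> 'b) \<Rightarrow> bool" where
  "smod_hom G Ev Od V W \<phi> \<longleftrightarrow>
     (\<forall>v\<in>vcarrier V. \<phi> v \<in> vcarrier W) \<and>
     (\<forall>u\<in>vcarrier V. \<forall>v\<in>vcarrier V. \<phi> (vadd V u v) = vadd W (\<phi> u) (\<phi> v)) \<and>
     (\<forall>a. \<forall>v\<in>vcarrier V. \<phi> (vsmult V a v) = vsmult W a (\<phi> v)) \<and>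
     \<phi> ` spar0 V \<subseteq> spar0 W \<and> \<phi> ` spar1 V \<subseteq> spar1 W \<and>
     (\<forall>x\<in>ssum G Ev Od. \<forall>v\<in>vcarrier V. \<phi> (sact V x v) = sact W x (\<phi> v))"

text \<open>A linear map \<open>U(g) \<rightarrow> N\<close> is encoded by its values on the monomials
  \<open>x_1 \<cdots> x_n\<close>, i.e. by a function on words \<open>'g list\<close> that is multilinear in each
  letter and respects the defining relations \<open>xy - (-1)^{|x||y|} yx = [x,y]\<close> of
  \<open>U(g)\<close> (universal property of \<open>U(g) = T(g)/I\<close>).  Words with letters outside the
  carrier are sent to zero (normalisation).\<close>

definition hom_Ug :: "'g cvs \<Rightarrow> ('g \<Rightarrow> 'g \<Rightarrow> 'g) \<Rightarrow> 'g set \<Rightarrow> 'g set \<Rightarrow> ('c, 'x) cvs_scheme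
     \<Rightarrow> ('g list \<Rightarrow> 'c) set" where
  "hom_Ug G br Ev Od N = {f.
     (\<forall>w. f w \<in> vcarrier N) \<and>
     (\<forall>w. \<not> set w \<subseteq> vcarrier G \<longrightarrow> f w = vzero N) \<and>
     (\<forall>u v a b. \<forall>x\<in>vcarrier G. \<forall>y\<in>vcarrier G.
        f (u @ [vadd G (vsmult G a x) (vsmult G b y)] @ v) =
        vadd N (vsmult N a (f (u @ [x] @ v))) (vsmult N b (f (u @ [y] @ v)))) \<and>
     (\<forall>u v p q x y. x \<in> hpart Ev Od p \<longrightarrow> y \<in> hpart Ev Od q \<longrightarrow>
        f (u @ [x, y] @ v) = vadd N (vsmult N (ssgn p q) (f (u @ [y, x] @ v))) (f (u @ [br x y] @ v)))}"

fun hword :: "'g set \<Rightarrow> 'g set \<Rightarrow> 'g list \<Rightarrow> bool \<Rightarrow> bool" where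
  "hword Ev Od [] p = (\<not> p)"
| "hword Ev Od (x # w) p = (\<exists>q. x \<in> hpart Ev Od q \<and> hword Ev Od w (p \<noteq> q))"

text \<open>\<open>Coind_{g_{\<ge>0}}^g(N)\<close> for a \<open>g_0\<close>-supermodule \<open>N\<close> (with \<open>g_1\<close> acting by zero):
  \<open>f(pu) = p f(u)\<close> for \<open>p \<in> U(g_{\<ge>0})\<close>, which (by linearity and multiplicativity)
  amounts to \<open>f(xu) = x f(u)\<close> for \<open>x \<in> g_0\<close> and \<open>f(xu) = 0\<close> for \<open>x \<in> g_1\<close>;
  \<open>g\<close> acts by \<open>(xf)(u) = f(ux)\<close>.\<close>
definition coind ::
  "'g cvs \<Rightarrow> ('g \<Rightarrow> 'g \<Rightarrow> 'g) \<Rightarrow> 'g set \<Rightarrow> 'g set \<Rightarrow> 'g set \<Rightarrow> ('c, 'g) smod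
     \<Rightarrow> ('g list \<Rightarrow> 'c, 'g) smod" where
  "coind G br gm g0 gp N =
     (let Ev = g0; Od = ssum G gm gp;
          C = {f \<in> hom_Ug G br Ev Od N.
                 (\<forall>x\<in>g0. \<forall>u. f (x # u) = sact N x (f u)) \<and>
                 (\<forall>x\<in>gp. \<forall>u. f (x # u) = vzero N)}
      in \<lparr> vcarrier = C,
           vadd = (\<lambda>f g w. vadd N (f w) (g w)),
           vsmult = (\<lambda>a f w. vsmult N a (f w)),
           vzero = (\<lambda>w. vzero N),
           spar0 = {f \<in> C. \<forall>w p. hword Ev Od w p \<longrightarrow> f w \<in> hpart (spar0 N) (spar1 N) p},
           spar1 = {f \<in> C. \<forall>w p. hword Ev Od w p \<longrightarrow> f w \<in> hpart (spar0 N) (spar1 N) (\<not> p)},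
           sact = (\<lambda>x f w. f (w @ [x])) \<rparr>)"

end

theory Submission
  imports Defs
begin

text \<open>Fix \<open>m \<noteq> 0\<close>. Since \<open>g\<^sub>-\<^sub>1\<close> is finite dimensional with \<open>[g\<^sub>-\<^sub>1, g\<^sub>-\<^sub>1] = 0\<close>,
  commuting \<open>g\<^sub>-\<^sub>1\<close> to the right shows that \<open>M = U(g) m\<close> is generated over
  \<open>g\<^sub>\<ge>\<^sub>0 = g\<^sub>0 \<oplus> g\<^sub>1\<close> by the finitely many vectors \<open>y\<^sub>1 \<cdots> y\<^sub>k m\<close>, \<open>y\<^sub>i\<close> distinct
  basis vectors of \<open>g\<^sub>-\<^sub>1\<close>. Hence Zorn's lemma gives a maximal proper
  \<open>g\<^sub>\<ge>\<^sub>0\<close>-submodule \<open>K\<close>. As \<open>g\<^sub>1\<close> acts by anticommuting operators of square zero, some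
  \<open>v \<notin> K\<close> has \<open>g\<^sub>1 v \<subseteq> K\<close>, and maximality then forces \<open>g\<^sub>1 M \<subseteq> K\<close>. So \<open>N = M/K\<close> is a
  simple \<open>g\<^sub>0\<close>-supermodule on which \<open>g\<^sub>1\<close> acts by zero, and by Frobenius reciprocity the
  quotient map induces the \<open>g\<close>-homomorphism \<open>v \<mapsto> (u \<mapsto> u v + K)\<close> into
  \<open>Coind(N)\<close>. It is nonzero, hence injective as \<open>M\<close> is simple.\<close>

section \<open>Vector spaces\<close>

locale vspace =
  fixes V :: "('a, 'b) cvs_scheme"
  assumes cvs: "cvs V"
begin

lemma cvs_axioms:
  "vzero V \<in> vcarrier V" "\<forall>x\<in>vcarrier V. \<forall>y\<in>vcarrier V. vadd V x y \<in> vcarrier V"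
  "\<forall>a. \<forall>x\<in>vcarrier V. vsmult V a x \<in> vcarrier V"
  "\<forall>x\<in>vcarrier V. \<forall>y\<in>vcarrier V. \<forall>z\<in>vcarrier V.
     vadd V (vadd V x y) z = vadd V x (vadd V y z)"
  "\<forall>x\<in>vcarrier V. \<forall>y\<in>vcarrier V. vadd V x y = vadd V y x"
  "\<forall>x\<in>vcarrier V. vadd V (vzero V) x = x"
  "\<forall>x\<in>vcarrier V. \<exists>y\<in>vcarrier V. vadd V x y = vzero V"
  "\<forall>a. \<forall>x\<in>vcarrier V. \<forall>y\<in>vcarrier V.
     vsmult V a (vadd V x y) = vadd V (vsmult V a x) (vsmult V a y)"
  "\<forall>a b. \<forall>x\<in>vcarrier V. vsmult V (a + b) x = vadd V (vsmult V a x) (vsmult V b x)"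
  "\<forall>a b. \<forall>x\<in>vcarrier V. vsmult V (a * b) x = vsmult V a (vsmult V b x)"
  "\<forall>x\<in>vcarrier V. vsmult V 1 x = x"
  using cvs unfolding cvs_def by auto

lemma zero_closed [simp]: "vzero V \<in> vcarrier V"
  using cvs_axioms(1) by blast

lemma add_closed [simp]: "x \<in> vcarrier V \<Longrightarrow> y \<in> vcarrier V \<Longrightarrow> vadd V x y \<in> vcarrier V"
  using cvs_axioms(2) by blast

lemma smult_closed [simp]: "x \<in> vcarrier V \<Longrightarrow> vsmult V a x \<in> vcarrier V"
  using cvs_axioms(3) by blast

lemma add_assoc:
  "x \<in> vcarrier V \<Longrightarrow> y \<in> vcarrier V \<Longrightarrow> z \<in> vcarrier V \<Longrightarrow>
   vadd V (vadd V x y) z = vadd V x (vadd V y z)"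
  using cvs_axioms(4) by blast

lemma add_commute: "x \<in> vcarrier V \<Longrightarrow> y \<in> vcarrier V \<Longrightarrow> vadd V x y = vadd V y x"
  using cvs_axioms(5) by blast

lemma zero_add [simp]: "x \<in> vcarrier V \<Longrightarrow> vadd V (vzero V) x = x"
  using cvs_axioms(6) by blast

lemma exists_neg: "x \<in> vcarrier V \<Longrightarrow> \<exists>y\<in>vcarrier V. vadd V x y = vzero V"
  using cvs_axioms(7) by blast

lemma smult_add_right:
  "x \<in> vcarrier V \<Longrightarrow> y \<in> vcarrier V \<Longrightarrow>
   vsmult V a (vadd V x y) = vadd V (vsmult V a x) (vsmult V a y)"
  using cvs_axioms(8) by blast

lemma smult_add_left: "x \<in> vcarrier V \<Longrightarrow> vsmult V (a + b) x = vadd V (vsmult V a x) (vsmult V b x)"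
  using cvs_axioms(9) by blast

lemma smult_smult: "x \<in> vcarrier V \<Longrightarrow> vsmult V (a * b) x = vsmult V a (vsmult V b x)"
  using cvs_axioms(10) by blast

lemma smult_one [simp]: "x \<in> vcarrier V \<Longrightarrow> vsmult V 1 x = x"
  using cvs_axioms(11) by blast

lemma add_zero [simp]: "x \<in> vcarrier V \<Longrightarrow> vadd V x (vzero V) = x"
  using add_commute[of x "vzero V"] by simp

lemma add_left_commute:
  "x \<in> vcarrier V \<Longrightarrow> y \<in> vcarrier V \<Longrightarrow> z \<in> vcarrier V \<Longrightarrow>
   vadd V x (vadd V y z) = vadd V y (vadd V x z)"
  by (metis add_assoc add_commute)

lemma add_add_swap:
  "a \<in> vcarrier V \<Longrightarrow> b \<in> vcarrier V \<Longrightarrow> c \<in> vcarrier V \<Longrightarrow> d \<in> vcarrier V \<Longrightarrow>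
   vadd V (vadd V a b) (vadd V c d) = vadd V (vadd V a c) (vadd V b d)"
  by (simp add: add_assoc add_left_commute[of b c d])

lemma add_left_cancel:
  assumes "x \<in> vcarrier V" "y \<in> vcarrier V" "z \<in> vcarrier V" "vadd V x y = vadd V x z"
  shows "y = z"
proof -
  obtain n where n: "n \<in> vcarrier V" "vadd V x n = vzero V" using exists_neg assms(1) by blast
  have "vadd V (vadd V n x) y = vadd V (vadd V n x) z"
    using assms n by (simp add: add_assoc)
  then show ?thesis using n assms by (simp add: add_commute[of n x])
qed

lemma smult_zero_left [simp]: "x \<in> vcarrier V \<Longrightarrow> vsmult V 0 x = vzero V"
  using add_left_cancel[of "vsmult V 0 x" "vsmult V 0 x" "vzero V"] smult_add_left[of x 0 0] by simp

lemma smult_zero_right [simp]: "vsmult V a (vzero V) = vzero V"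
  using add_left_cancel[of "vsmult V a (vzero V)" "vsmult V a (vzero V)" "vzero V"]
    smult_add_right[of "vzero V" "vzero V" a] by simp

lemma add_neg [simp]: "x \<in> vcarrier V \<Longrightarrow> vadd V x (vsmult V (-1) x) = vzero V"
  using smult_add_left[of x 1 "-1"] by simp

lemma neg_neg [simp]: "x \<in> vcarrier V \<Longrightarrow> vsmult V (-1) (vsmult V (-1) x) = x"
  by (simp flip: smult_smult)

lemma neg_unique:
  "x \<in> vcarrier V \<Longrightarrow> y \<in> vcarrier V \<Longrightarrow> vadd V x y = vzero V \<Longrightarrow> y = vsmult V (-1) x"
  using add_left_cancel[of x y "vsmult V (-1) x"] by simp

lemma add_sub_cancel:
  "y \<in> vcarrier V \<Longrightarrow> z \<in> vcarrier V \<Longrightarrow> vadd V (vadd V y z) (vsmult V (-1) z) = y"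
  by (simp add: add_assoc)

lemma double_eq_zero: "x \<in> vcarrier V \<Longrightarrow> vadd V x x = vzero V \<Longrightarrow> x = vzero V"
proof -
  assume x: "x \<in> vcarrier V" "vadd V x x = vzero V"
  have "vadd V (vsmult V (1/2) x) (vsmult V (1/2) x) = vsmult V (1/2) (vadd V x x)"
    using x(1) by (simp add: smult_add_right)
  also have "\<dots> = vzero V" using x(2) by simp
  finally have "vsmult V (1/2 + 1/2) x = vzero V"
    using x(1) by (simp only: smult_add_left)
  then show ?thesis using x(1) by simp
qed

lemma sub_eq_zero:
  "x \<in> vcarrier V \<Longrightarrow> y \<in> vcarrier V \<Longrightarrow> vadd V x (vsmult V (-1) y) = vzero V \<Longrightarrow> x = y"
proof -
  assume xy: "x \<in> vcarrier V" "y \<in> vcarrier V" "vadd V x (vsmult V (-1) y) = vzero V"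
  then have "vsmult V (-1) y = vsmult V (-1) x" using neg_unique[of x "vsmult V (-1) y"] by simp
  then have "vsmult V (-1) (vsmult V (-1) y) = vsmult V (-1) (vsmult V (-1) x)" by simp
  then show "x = y" using xy(1,2) by simp
qed

lemma csubspace_carrier: "csubspace V (vcarrier V)"
  unfolding csubspace_def by simp

end

inductive_set cspan :: "('a, 'b) cvs_scheme \<Rightarrow> 'a set \<Rightarrow> 'a set" for V S where
  zero: "vzero V \<in> cspan V S"
| gen: "x \<in> S \<Longrightarrow> x \<in> cspan V S"
| add: "x \<in> cspan V S \<Longrightarrow> y \<in> cspan V S \<Longrightarrow> vadd V x y \<in> cspan V S"
| smult: "x \<in> cspan V S \<Longrightarrow> vsmult V a x \<in> cspan V S"

lemma csubspaceD:
  assumes "csubspace V S"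
  shows "S \<subseteq> vcarrier V" "vzero V \<in> S" "x \<in> S \<Longrightarrow> y \<in> S \<Longrightarrow> vadd V x y \<in> S"
    "x \<in> S \<Longrightarrow> vsmult V a x \<in> S"
  using assms unfolding csubspace_def by auto

lemma cspan_minimal: "csubspace V Q \<Longrightarrow> S \<subseteq> Q \<Longrightarrow> cspan V S \<subseteq> Q"
proof
  fix x assume Q: "csubspace V Q" "S \<subseteq> Q" and "x \<in> cspan V S"
  from \<open>x \<in> cspan V S\<close> show "x \<in> Q" by induction (use Q in \<open>auto simp: csubspace_def\<close>)
qed

lemma (in vspace) csubspace_cspan: "S \<subseteq> vcarrier V \<Longrightarrow> csubspace V (cspan V S)"
proof -
  assume S: "S \<subseteq> vcarrier V"
  have "cspan V S \<subseteq> vcarrier V"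
    by (rule cspan_minimal) (use S in \<open>auto simp: csubspace_def\<close>)
  then show ?thesis unfolding csubspace_def by (auto intro: cspan.intros)
qed

lemma (in vspace) lincomb_in_cspan: "set bs \<subseteq> vcarrier V \<Longrightarrow> lincomb V (zip cs bs) \<in> cspan V (set bs)"
proof (induction bs arbitrary: cs)
  case Nil
  then show ?case by (simp add: lincomb_def cspan.zero)
next
  case (Cons b bs)
  have "cspan V (set bs) \<subseteq> cspan V (set (b # bs))"
    by (rule cspan_minimal) (use Cons.prems in \<open>auto intro: csubspace_cspan cspan.gen\<close>)
  show ?case
  proof (cases cs)
    case Nil
    then show ?thesis by (simp add: lincomb_def cspan.zero)
  next
    case (Cons c cs')
    have "lincomb V (zip cs' bs) \<in> cspan V (set (b # bs))"
      using Cons.IH[of cs'] Cons.prems \<open>cspan V (set bs) \<subseteq> _\<close> by auto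
    moreover have "b \<in> cspan V (set (b # bs))" by (rule cspan.gen) simp
    ultimately show ?thesis
      using Cons unfolding lincomb_def by (auto intro!: cspan.add cspan.smult)
  qed
qed

lemma linear_image_cspan:
  assumes V: "vspace V" and W: "vspace W" and D: "csubspace V D" and "S \<subseteq> D"
    and f_closed: "\<forall>x\<in>D. f x \<in> vcarrier W"
    and f_add: "\<forall>x\<in>D. \<forall>y\<in>D. f (vadd V x y) = vadd W (f x) (f y)"
    and f_smult: "\<forall>a. \<forall>x\<in>D. f (vsmult V a x) = vsmult W a (f x)"
    and T: "csubspace W T" and "f ` S \<subseteq> T"
  shows "f ` cspan V S \<subseteq> T"
proof -
  have "cspan V S \<subseteq> D" using cspan_minimal[OF D \<open>S \<subseteq> D\<close>] .
  have "f x \<in> T" if "x \<in> cspan V S" for x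
    using that
  proof induction
    case zero
    have "f (vzero V) = f (vsmult V 0 (vzero V))" using V by (simp add: vspace.smult_zero_right)
    also have "\<dots> = vzero W"
      using f_smult f_closed csubspaceD(2)[OF D] W by (simp add: vspace.smult_zero_left)
    finally show ?case using csubspaceD(2)[OF T] by simp
  next
    case (gen x)
    then show ?case using \<open>f ` S \<subseteq> T\<close> by blast
  next
    case (add x y)
    then have "x \<in> D" "y \<in> D" using \<open>cspan V S \<subseteq> D\<close> by auto
    then show ?case using add f_add csubspaceD(3)[OF T] by simp
  next
    case (smult x a)
    then have "x \<in> D" using \<open>cspan V S \<subseteq> D\<close> by auto
    then show ?case using smult f_smult csubspaceD(4)[OF T] by simp
  qed
  then show ?thesis by blast
qed

lemma dsum_unique:
  assumes "dsum V S T U" "a \<in> S" "a' \<in> S" "b \<in> T" "b' \<in> T" "vadd V a b = vadd V a' b'"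
    "vadd V a b \<in> U"
  shows "a = a'" "b = b'"
proof -
  have "\<exists>!p. fst p \<in> S \<and> snd p \<in> T \<and> vadd V a b = vadd V (fst p) (snd p)"
    using assms(1,7) unfolding dsum_def by blast
  then have "(a, b) = (a', b')" using assms(2-6) by (metis fst_conv snd_conv)
  then show "a = a'" "b = b'" by auto
qed

lemma dsum_exists:
  assumes "dsum V S T U" "x \<in> U"
  obtains a b where "a \<in> S" "b \<in> T" "x = vadd V a b"
proof -
  have "\<exists>!p. fst p \<in> S \<and> snd p \<in> T \<and> x = vadd V (fst p) (snd p)"
    using assms unfolding dsum_def by blast
  then show ?thesis using that by blast
qed

lemma dsum_eq_ssum: "dsum V S T U \<Longrightarrow> U = ssum V S T"
proof
  assume ds: "dsum V S T U"
  show "U \<subseteq> ssum V S T"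
  proof
    fix x assume "x \<in> U"
    then obtain a b where "a \<in> S" "b \<in> T" "x = vadd V a b" by (rule dsum_exists[OF ds])
    then show "x \<in> ssum V S T" unfolding ssum_def by blast
  qed
  show "ssum V S T \<subseteq> U" using ds unfolding dsum_def by blast
qed

lemma (in vspace) csubspace_ssum:
  assumes S: "csubspace V S" and T: "csubspace V T"
  shows "csubspace V (ssum V S T)"
proof -
  have SC: "S \<subseteq> vcarrier V" and TC: "T \<subseteq> vcarrier V" using S T by (auto dest: csubspaceD(1))
  have "vadd V x y \<in> ssum V S T" if xy: "x \<in> ssum V S T" "y \<in> ssum V S T" for x y
  proof -
    obtain a b c d where abcd: "a \<in> S" "b \<in> T" "c \<in> S" "d \<in> T"
      and "x = vadd V a b" "y = vadd V c d"
      using xy unfolding ssum_def by blast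
    then have "vadd V x y = vadd V (vadd V a c) (vadd V b d)"
      using SC TC by (simp add: add_add_swap subset_iff)
    then show ?thesis unfolding ssum_def using abcd S T by (blast dest: csubspaceD(3))
  qed
  moreover have "vsmult V k x \<in> ssum V S T" if x: "x \<in> ssum V S T" for x k
  proof -
    obtain a b where ab: "a \<in> S" "b \<in> T" and "x = vadd V a b"
      using x unfolding ssum_def by blast
    then have "vsmult V k x = vadd V (vsmult V k a) (vsmult V k b)"
      using SC TC by (simp add: smult_add_right subset_iff)
    then show ?thesis unfolding ssum_def using ab S T by (blast dest: csubspaceD(4))
  qed
  moreover have "vzero V \<in> ssum V S T"
    unfolding ssum_def using csubspaceD(2)[OF S] csubspaceD(2)[OF T] zero_add[OF zero_closed]
    by force
  moreover have "ssum V S T \<subseteq> vcarrier V" unfolding ssum_def using SC TC by (auto intro!: add_closed)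
  ultimately show ?thesis unfolding csubspace_def by blast
qed

lemma (in vspace) dsum_summands_subset:
  assumes ds: "dsum V S T U"
  shows "S \<subseteq> U" "T \<subseteq> U"
proof -
  have S: "csubspace V S" and T: "csubspace V T" using ds unfolding dsum_def by auto
  have SC: "S \<subseteq> vcarrier V" and TC: "T \<subseteq> vcarrier V" using S T by (auto dest: csubspaceD(1))
  have "ssum V S T \<subseteq> U" using ds unfolding dsum_def by blast
  moreover have "a \<in> ssum V S T" if "a \<in> S" for a
  proof -
    have "a = vadd V a (vzero V)" using that SC by auto
    then show ?thesis unfolding ssum_def using that csubspaceD(2)[OF T] by blast
  qed
  moreover have "b \<in> ssum V S T" if "b \<in> T" for b
  proof -
    have "b = vadd V (vzero V) b" using that TC by auto
    then show ?thesis unfolding ssum_def using that csubspaceD(2)[OF S] by blast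
  qed
  ultimately show "S \<subseteq> U" "T \<subseteq> U" by blast+
qed

lemma (in vspace) dsum_decomposition:
  assumes ds: "dsum V S T U"
  obtains p where "\<And>a b. a \<in> S \<Longrightarrow> b \<in> T \<Longrightarrow> p (vadd V a b) = (a, b)"
    "\<And>x. x \<in> U \<Longrightarrow> fst (p x) \<in> S \<and> snd (p x) \<in> T"
    "\<And>x y. x \<in> U \<Longrightarrow> y \<in> U \<Longrightarrow>
       p (vadd V x y) = (vadd V (fst (p x)) (fst (p y)), vadd V (snd (p x)) (snd (p y)))"
    "\<And>c x. x \<in> U \<Longrightarrow> p (vsmult V c x) = (vsmult V c (fst (p x)), vsmult V c (snd (p x)))"
proof -
  have S: "csubspace V S" and T: "csubspace V T" using ds unfolding dsum_def by auto
  have U: "U = ssum V S T" using dsum_eq_ssum[OF ds] .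
  have SC: "S \<subseteq> vcarrier V" and TC: "T \<subseteq> vcarrier V" using S T by (auto dest: csubspaceD(1))
  define p where "p x = (SOME p. fst p \<in> S \<and> snd p \<in> T \<and> x = vadd V (fst p) (snd p))" for x
  have p_eq: "p (vadd V a b) = (a, b)" if "a \<in> S" "b \<in> T" for a b
  proof -
    have ab: "vadd V a b \<in> U" unfolding U ssum_def using that by blast
    have "\<exists>q. fst q \<in> S \<and> snd q \<in> T \<and> vadd V a b = vadd V (fst q) (snd q)"
      using that by (intro exI[of _ "(a, b)"]) simp
    then have "fst (p (vadd V a b)) \<in> S \<and> snd (p (vadd V a b)) \<in> T \<and>
        vadd V a b = vadd V (fst (p (vadd V a b))) (snd (p (vadd V a b)))"
      unfolding p_def by (rule someI_ex)
    then have "a = fst (p (vadd V a b))" "b = snd (p (vadd V a b))"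
      using dsum_unique[OF ds that(1) _ that(2) _ _ ab] by blast+
    then show ?thesis by (simp add: prod_eq_iff)
  qed
  show ?thesis
  proof (rule that[OF p_eq])
    show "fst (p x) \<in> S \<and> snd (p x) \<in> T" if "x \<in> U" for x
      using that p_eq unfolding U ssum_def by auto
    show "p (vadd V x y) = (vadd V (fst (p x)) (fst (p y)), vadd V (snd (p x)) (snd (p y)))"
      if "x \<in> U" "y \<in> U" for x y
    proof -
      obtain a b where ab: "a \<in> S" "b \<in> T" "x = vadd V a b" using \<open>x \<in> U\<close> unfolding U ssum_def by blast
      obtain a' b' where ab': "a' \<in> S" "b' \<in> T" "y = vadd V a' b'"
        using \<open>y \<in> U\<close> unfolding U ssum_def by blast
      have C: "a \<in> vcarrier V" "b \<in> vcarrier V" "a' \<in> vcarrier V" "b' \<in> vcarrier V"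
        using ab ab' SC TC by auto
      show ?thesis
        using p_eq[of "vadd V a a'" "vadd V b b'"] ab ab' csubspaceD(3)[OF S] csubspaceD(3)[OF T]
        by (simp add: p_eq add_add_swap[OF C(1,2,3,4)])
    qed
    show "p (vsmult V c x) = (vsmult V c (fst (p x)), vsmult V c (snd (p x)))" if "x \<in> U" for c x
    proof -
      obtain a b where ab: "a \<in> S" "b \<in> T" "x = vadd V a b" using \<open>x \<in> U\<close> unfolding U ssum_def by blast
      have C: "a \<in> vcarrier V" "b \<in> vcarrier V" using ab SC TC by auto
      show ?thesis
        using p_eq[of "vsmult V c a" "vsmult V c b"] ab csubspaceD(4)[OF S] csubspaceD(4)[OF T]
        by (simp add: p_eq smult_add_right[OF C(1,2)])
    qed
  qed
qed

lemma (in vspace) fin_dim_retract: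
  assumes fd: "fin_dim V U" and U: "csubspace V U" and R: "csubspace V R" "R \<subseteq> U"
    and f: "\<forall>x\<in>U. f x \<in> R" "\<forall>r\<in>R. f r = r"
    and f_add: "\<forall>x\<in>U. \<forall>y\<in>U. f (vadd V x y) = vadd V (f x) (f y)"
    and f_smult: "\<forall>c. \<forall>x\<in>U. f (vsmult V c x) = vsmult V c (f x)"
  shows "\<exists>B. finite B \<and> B \<subseteq> R \<and> R \<subseteq> cspan V B"
proof -
  obtain bs where bs: "set bs \<subseteq> U" "\<forall>x\<in>U. \<exists>cs. length cs = length bs \<and> x = lincomb V (zip cs bs)"
    using fd unfolding fin_dim_def by blast
  have U_span: "U \<subseteq> cspan V (set bs)"
  proof
    fix x assume "x \<in> U"
    then obtain cs where "x = lincomb V (zip cs bs)" using bs(2) by blast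
    moreover have "set bs \<subseteq> vcarrier V" using bs(1) csubspaceD(1)[OF U] by blast
    ultimately show "x \<in> cspan V (set bs)" using lincomb_in_cspan by blast
  qed
  show ?thesis
  proof (intro exI conjI)
    show "finite (f ` set bs)" by simp
    show "f ` set bs \<subseteq> R" using f(1) bs(1) by blast
    have RC: "R \<subseteq> vcarrier V" using csubspaceD(1)[OF R(1)] .
    have "f ` cspan V (set bs) \<subseteq> cspan V (f ` set bs)"
    proof (rule linear_image_cspan[OF vspace_axioms vspace_axioms U bs(1)])
      show "csubspace V (cspan V (f ` set bs))" using RC \<open>f ` set bs \<subseteq> R\<close> by (intro csubspace_cspan) blast
      show "f ` set bs \<subseteq> cspan V (f ` set bs)" by (auto intro: cspan.gen)
    qed (use f f_add f_smult RC in \<open>simp_all add: subset_iff\<close>)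
    moreover have "R \<subseteq> f ` cspan V (set bs)"
    proof
      fix r assume "r \<in> R"
      then show "r \<in> f ` cspan V (set bs)" using f(2) U_span R(2) by (intro image_eqI[of r _ r]) auto
    qed
    ultimately show "R \<subseteq> cspan V (f ` set bs)" by blast
  qed
qed

lemma (in vspace) fin_dim_dsum:
  assumes ds: "dsum V S T U" and fd: "fin_dim V U"
  shows "\<exists>B. finite B \<and> B \<subseteq> S \<and> S \<subseteq> cspan V B" "\<exists>B. finite B \<and> B \<subseteq> T \<and> T \<subseteq> cspan V B"
proof -
  have S: "csubspace V S" and T: "csubspace V T" using ds unfolding dsum_def by auto
  have U: "csubspace V U" using csubspace_ssum[OF S T] dsum_eq_ssum[OF ds] by simp
  obtain p where p_eq: "\<And>a b. a \<in> S \<Longrightarrow> b \<in> T \<Longrightarrow> p (vadd V a b) = (a, b)"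
    and p_in: "\<And>x. x \<in> U \<Longrightarrow> fst (p x) \<in> S \<and> snd (p x) \<in> T"
    and p_add: "\<And>x y. x \<in> U \<Longrightarrow> y \<in> U \<Longrightarrow>
       p (vadd V x y) = (vadd V (fst (p x)) (fst (p y)), vadd V (snd (p x)) (snd (p y)))"
    and p_smult: "\<And>c x. x \<in> U \<Longrightarrow> p (vsmult V c x) = (vsmult V c (fst (p x)), vsmult V c (snd (p x)))"
    using dsum_decomposition[OF ds] by metis
  have SC: "S \<subseteq> vcarrier V" and TC: "T \<subseteq> vcarrier V" using S T by (auto dest: csubspaceD(1))
  have "\<forall>a\<in>S. fst (p a) = a" using p_eq[OF _ csubspaceD(2)[OF T]] SC by (auto simp: subset_iff)
  then show "\<exists>B. finite B \<and> B \<subseteq> S \<and> S \<subseteq> cspan V B"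
    using fin_dim_retract[OF fd U S dsum_summands_subset(1)[OF ds], of "\<lambda>x. fst (p x)"] p_in p_add p_smult
    by simp
  have "\<forall>b\<in>T. snd (p b) = b" using p_eq[OF csubspaceD(2)[OF S]] TC by (auto simp: subset_iff)
  then show "\<exists>B. finite B \<and> B \<subseteq> T \<and> T \<subseteq> cspan V B"
    using fin_dim_retract[OF fd U T dsum_summands_subset(2)[OF ds], of "\<lambda>x. snd (p x)"] p_in p_add p_smult
    by simp
qed

section \<open>Supermodules\<close>

definition word_act :: "('m, 'g) smod \<Rightarrow> 'g list \<Rightarrow> 'm \<Rightarrow> 'm" where
  "word_act M w v = foldr (sact M) w v"

lemma word_act_simps [simp]:
  "word_act M [] v = v" "word_act M (x # w) v = sact M x (word_act M w v)"
  "word_act M (w @ u) v = word_act M w (word_act M u v)"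
  by (simp_all add: word_act_def)

definition graded_subset :: "('m, 'g) smod \<Rightarrow> 'm set \<Rightarrow> bool" where
  "graded_subset M Q \<longleftrightarrow>
     (\<forall>w\<in>Q. \<forall>a b. a \<in> spar0 M \<longrightarrow> b \<in> spar1 M \<longrightarrow> w = vadd M a b \<longrightarrow> a \<in> Q \<and> b \<in> Q)"

lemma sub_smod_iff:
  "sub_smod G Ev Od M W \<longleftrightarrow>
     csubspace M W \<and> graded_subset M W \<and> (\<forall>x\<in>ssum G Ev Od. \<forall>w\<in>W. sact M x w \<in> W)"
  unfolding sub_smod_def graded_subset_def by blast

definition maximal_sub_smod :: "'g cvs \<Rightarrow> 'g set \<Rightarrow> 'g set \<Rightarrow> ('m, 'g) smod \<Rightarrow> 'm set \<Rightarrow> bool" where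
  "maximal_sub_smod G Ev Od M K \<longleftrightarrow> sub_smod G Ev Od M K \<and> K \<noteq> vcarrier M \<and>
     (\<forall>X. sub_smod G Ev Od M X \<longrightarrow> K \<subseteq> X \<longrightarrow> X = K \<or> X = vcarrier M)"

lemma hpart_simps [simp]: "hpart Ev Od False = Ev" "hpart Ev Od True = Od"
  by (simp_all add: hpart_def)

lemma ssgn_simps [simp]: "ssgn False q = 1" "ssgn p False = 1" "ssgn True True = -1"
  by (simp_all add: ssgn_def)

lemma ssum_mono: "S' \<subseteq> S \<Longrightarrow> T' \<subseteq> T \<Longrightarrow> ssum V S' T' \<subseteq> ssum V S T"
  unfolding ssum_def by blast

lemma hpart_mono: "Ev' \<subseteq> Ev \<Longrightarrow> Od' \<subseteq> Od \<Longrightarrow> hpart Ev' Od' p \<subseteq> hpart Ev Od p"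
  by (cases p) auto

lemma smod_mono:
  assumes "Ev' \<subseteq> Ev" "Od' \<subseteq> Od" "smod G br Ev Od M"
  shows "smod G br Ev' Od' M"
proof -
  have "ssum G Ev' Od' \<subseteq> ssum G Ev Od" using ssum_mono[OF assms(1,2)] .
  moreover have "\<And>p. hpart Ev' Od' p \<subseteq> hpart Ev Od p" using hpart_mono[OF assms(1,2)] .
  ultimately show ?thesis using assms(3) unfolding smod_def by (simp add: subset_iff)
qed

lemma smod_hom_mono:
  assumes "ssum G Ev' Od' \<subseteq> ssum G Ev Od" and "smod_hom G Ev Od M N f"
  shows "smod_hom G Ev' Od' M N f"
proof -
  have "\<forall>x\<in>ssum G Ev Od. \<forall>v\<in>vcarrier M. f (sact M x v) = sact N x (f v)"
    using assms(2) unfolding smod_hom_def by (elim conjE) assumption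
  then have "\<forall>x\<in>ssum G Ev' Od'. \<forall>v\<in>vcarrier M. f (sact M x v) = sact N x (f v)"
    using assms(1) by (simp add: subset_iff)
  then show ?thesis using assms(2) unfolding smod_hom_def by (elim conjE) (intro conjI)
qed

text \<open>The largest \<open>A\<close>-stable subset of \<open>Q\<close>.\<close>
definition word_core :: "('m, 'g) smod \<Rightarrow> 'g set \<Rightarrow> 'm set \<Rightarrow> 'm set" where
  "word_core M A Q = {v \<in> vcarrier M. \<forall>w. set w \<subseteq> A \<longrightarrow> word_act M w v \<in> Q}"

locale supermodule = G: vspace G for G :: "'g cvs" +
  fixes br :: "'g \<Rightarrow> 'g \<Rightarrow> 'g" and Ev Od :: "'g set" and M :: "('m, 'g) smod"
  assumes smod: "smod G br Ev Od M"
    and csubspace_Ev: "csubspace G Ev" and csubspace_Od: "csubspace G Od"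
begin

lemma hpart_subset_ssum: "hpart Ev Od p \<subseteq> ssum G Ev Od"
proof
  fix x assume x: "x \<in> hpart Ev Od p"
  have z: "vzero G \<in> Ev" "vzero G \<in> Od" using csubspace_Ev csubspace_Od by (auto dest: csubspaceD(2))
  have C: "Ev \<subseteq> vcarrier G" "Od \<subseteq> vcarrier G" using csubspace_Ev csubspace_Od by (auto dest: csubspaceD(1))
  show "x \<in> ssum G Ev Od"
  proof (cases p)
    case False
    then have "x \<in> Ev" "x = vadd G x (vzero G)" using x C by auto
    then show ?thesis unfolding ssum_def using z by blast
  next
    case True
    then have "x \<in> Od" "x = vadd G (vzero G) x" using x C by auto
    then show ?thesis unfolding ssum_def using z by blast
  qed
qed

sublocale vspace M
  using smod unfolding smod_def vspace_def by (elim conjE) assumption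

lemma dsum_parity: "dsum M (spar0 M) (spar1 M) (vcarrier M)"
  using smod unfolding smod_def by (elim conjE) assumption

lemma csubspace_spar: "csubspace M (spar0 M)" "csubspace M (spar1 M)"
  using dsum_parity unfolding dsum_def by auto

lemma hpart_subset_carrier: "hpart (spar0 M) (spar1 M) p \<subseteq> vcarrier M"
  using csubspace_spar[THEN csubspaceD(1)] by (cases p) auto

lemma parity_decomp:
  assumes "v \<in> vcarrier M"
  obtains a b where "a \<in> spar0 M" "b \<in> spar1 M" "v = vadd M a b"
  using dsum_exists[OF dsum_parity assms] by blast

lemma sact_closed [simp]: "x \<in> ssum G Ev Od \<Longrightarrow> v \<in> vcarrier M \<Longrightarrow> sact M x v \<in> vcarrier M"
proof -
  have "\<forall>x\<in>ssum G Ev Od. \<forall>v\<in>vcarrier M. sact M x v \<in> vcarrier M"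
    using smod unfolding smod_def by (elim conjE) assumption
  then show "x \<in> ssum G Ev Od \<Longrightarrow> v \<in> vcarrier M \<Longrightarrow> sact M x v \<in> vcarrier M" by blast
qed

lemma sact_lincomb_right:
  assumes "x \<in> ssum G Ev Od" "v \<in> vcarrier M" "w \<in> vcarrier M"
  shows "sact M x (vadd M (vsmult M a v) (vsmult M b w)) =
    vadd M (vsmult M a (sact M x v)) (vsmult M b (sact M x w))"
proof -
  have "\<forall>x\<in>ssum G Ev Od. \<forall>a b. \<forall>v\<in>vcarrier M. \<forall>w\<in>vcarrier M.
     sact M x (vadd M (vsmult M a v) (vsmult M b w)) =
     vadd M (vsmult M a (sact M x v)) (vsmult M b (sact M x w))"
    using smod unfolding smod_def by (elim conjE) assumption
  then show ?thesis using assms by blast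
qed

lemma sact_lincomb_left:
  assumes "x \<in> ssum G Ev Od" "y \<in> ssum G Ev Od" "v \<in> vcarrier M"
  shows "sact M (vadd G (vsmult G a x) (vsmult G b y)) v =
    vadd M (vsmult M a (sact M x v)) (vsmult M b (sact M y v))"
proof -
  have "\<forall>x\<in>ssum G Ev Od. \<forall>y\<in>ssum G Ev Od. \<forall>a b. \<forall>v\<in>vcarrier M.
     sact M (vadd G (vsmult G a x) (vsmult G b y)) v =
     vadd M (vsmult M a (sact M x v)) (vsmult M b (sact M y v))"
    using smod unfolding smod_def by (elim conjE) assumption
  then show ?thesis using assms by blast
qed

lemma sact_hpart:
  assumes "x \<in> hpart Ev Od p" "v \<in> hpart (spar0 M) (spar1 M) q"
  shows "sact M x v \<in> hpart (spar0 M) (spar1 M) (p \<noteq> q)"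
proof -
  have "\<forall>p q x v. x \<in> hpart Ev Od p \<longrightarrow> v \<in> hpart (spar0 M) (spar1 M) q \<longrightarrow>
     sact M x v \<in> hpart (spar0 M) (spar1 M) (p \<noteq> q)"
    using smod unfolding smod_def by (elim conjE) assumption
  then show ?thesis using assms by blast
qed

lemma sact_bracket:
  assumes "x \<in> hpart Ev Od p" "y \<in> hpart Ev Od q" "v \<in> vcarrier M"
  shows "sact M (br x y) v =
    vadd M (sact M x (sact M y v)) (vsmult M (- ssgn p q) (sact M y (sact M x v)))"
proof -
  have "\<forall>p q x y. \<forall>v\<in>vcarrier M. x \<in> hpart Ev Od p \<longrightarrow> y \<in> hpart Ev Od q \<longrightarrow>
     sact M (br x y) v = vadd M (sact M x (sact M y v)) (vsmult M (- ssgn p q) (sact M y (sact M x v)))"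
    using smod unfolding smod_def by (elim conjE) assumption
  then show ?thesis using assms by blast
qed

lemma sact_add_right:
  "x \<in> ssum G Ev Od \<Longrightarrow> v \<in> vcarrier M \<Longrightarrow> w \<in> vcarrier M \<Longrightarrow>
   sact M x (vadd M v w) = vadd M (sact M x v) (sact M x w)"
  using sact_lincomb_right[of x v w 1 1] by simp

lemma sact_smult_right:
  "x \<in> ssum G Ev Od \<Longrightarrow> v \<in> vcarrier M \<Longrightarrow> sact M x (vsmult M a v) = vsmult M a (sact M x v)"
  using sact_lincomb_right[of x v "vzero M" a 0] by simp

lemma sact_zero_right [simp]: "x \<in> ssum G Ev Od \<Longrightarrow> sact M x (vzero M) = vzero M"
  using sact_smult_right[of x "vzero M" 0] by simp

lemma word_act_closed [simp]:
  "set w \<subseteq> ssum G Ev Od \<Longrightarrow> v \<in> vcarrier M \<Longrightarrow> word_act M w v \<in> vcarrier M"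
  by (induction w) auto

lemma word_act_add:
  "set w \<subseteq> ssum G Ev Od \<Longrightarrow> v \<in> vcarrier M \<Longrightarrow> u \<in> vcarrier M \<Longrightarrow>
   word_act M w (vadd M v u) = vadd M (word_act M w v) (word_act M w u)"
  by (induction w) (auto simp: sact_add_right)

lemma word_act_smult:
  "set w \<subseteq> ssum G Ev Od \<Longrightarrow> v \<in> vcarrier M \<Longrightarrow> word_act M w (vsmult M a v) = vsmult M a (word_act M w v)"
  by (induction w) (auto simp: sact_smult_right)

lemma word_act_zero [simp]: "set w \<subseteq> ssum G Ev Od \<Longrightarrow> word_act M w (vzero M) = vzero M"
  by (induction w) auto

lemma graded_split:
  assumes Q: "graded_subset M Q" and x: "x \<in> hpart (spar0 M) (spar1 M) p"
    and y: "y \<in> hpart (spar0 M) (spar1 M) (\<not> p)" and xy: "vadd M x y \<in> Q"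
  shows "x \<in> Q" "y \<in> Q"
proof -
  have "x \<in> Q \<and> y \<in> Q"
  proof (cases p)
    case False
    then have "x \<in> spar0 M" "y \<in> spar1 M" using x y by auto
    then show ?thesis using Q[unfolded graded_subset_def, rule_format, OF xy] by blast
  next
    case True
    then have "x \<in> spar1 M" "y \<in> spar0 M" using x y by auto
    moreover have "vadd M y x = vadd M x y"
      using calculation csubspace_spar[THEN csubspaceD(1)] by (blast intro: add_commute)
    ultimately show ?thesis using Q[unfolded graded_subset_def, rule_format, of "vadd M y x"] xy
      by simp
  qed
  then show "x \<in> Q" "y \<in> Q" by auto
qed

lemma sub_smod_zero: "sub_smod G Ev Od M {vzero M}"
proof -
  have "graded_subset M {vzero M}"
    unfolding graded_subset_def
  proof (intro ballI allI impI)
    fix w a b assume w: "w \<in> {vzero M}" and ab: "a \<in> spar0 M" "b \<in> spar1 M" "w = vadd M a b"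
    have z: "vzero M \<in> spar0 M" "vzero M \<in> spar1 M" using csubspace_spar[THEN csubspaceD(2)] .
    have "vadd M a b = vadd M (vzero M) (vzero M)" "vadd M a b \<in> vcarrier M" using w ab by auto
    then have "a = vzero M" "b = vzero M" using dsum_unique[OF dsum_parity ab(1) z(1) ab(2) z(2)] by auto
    then show "a \<in> {vzero M} \<and> b \<in> {vzero M}" by simp
  qed
  moreover have "csubspace M {vzero M}" unfolding csubspace_def by simp
  ultimately show ?thesis unfolding sub_smod_iff by simp
qed

lemma sub_smod_Union_chain:
  assumes "\<forall>X\<in>C. sub_smod G Ev Od M X" "chain\<^sub>\<subseteq> C" "C \<noteq> {}"
  shows "sub_smod G Ev Od M (\<Union>C)"
proof -
  have cs: "csubspace M X" and gr: "graded_subset M X"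
    and st: "\<forall>x\<in>ssum G Ev Od. \<forall>w\<in>X. sact M x w \<in> X" if "X \<in> C" for X
    using assms(1) that unfolding sub_smod_iff by auto
  have common: "\<exists>Z\<in>C. x \<in> Z \<and> y \<in> Z" if "x \<in> \<Union>C" "y \<in> \<Union>C" for x y
  proof -
    from that obtain X Y where "X \<in> C" "x \<in> X" "Y \<in> C" "y \<in> Y" by blast
    moreover have "X \<subseteq> Y \<or> Y \<subseteq> X" using assms(2) calculation unfolding chain_subset_def by blast
    ultimately show ?thesis by blast
  qed
  have "csubspace M (\<Union>C)"
    unfolding csubspace_def
  proof (intro conjI ballI allI)
    show "\<Union>C \<subseteq> vcarrier M" using cs[THEN csubspaceD(1)] by blast
    show "vzero M \<in> \<Union>C" using cs[THEN csubspaceD(2)] assms(3) by blast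
    show "vadd M x y \<in> \<Union>C" if "x \<in> \<Union>C" "y \<in> \<Union>C" for x y
    proof -
      from common[OF that] obtain Z where "Z \<in> C" "x \<in> Z" "y \<in> Z" by blast
      then show ?thesis using csubspaceD(3)[OF cs] by blast
    qed
    show "vsmult M a x \<in> \<Union>C" if "x \<in> \<Union>C" for a x
      using that csubspaceD(4)[OF cs] by blast
  qed
  moreover have "graded_subset M (\<Union>C)"
    unfolding graded_subset_def
  proof (intro ballI allI impI)
    fix w a b assume "w \<in> \<Union>C" "a \<in> spar0 M" "b \<in> spar1 M" "w = vadd M a b"
    moreover from \<open>w \<in> \<Union>C\<close> obtain X where "X \<in> C" "w \<in> X" by blast
    ultimately show "a \<in> \<Union>C \<and> b \<in> \<Union>C" using gr unfolding graded_subset_def by blast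
  qed
  moreover have "\<forall>x\<in>ssum G Ev Od. \<forall>w\<in>\<Union>C. sact M x w \<in> \<Union>C"
    using st by blast
  ultimately show ?thesis unfolding sub_smod_iff by blast
qed

text \<open>By Zorn's lemma: as \<open>S\<close> is finite, the union of a chain avoiding \<open>S\<close> avoids \<open>S\<close>.\<close>
lemma exists_maximal_sub_smod_avoiding:
  assumes "finite S" "\<not> S \<subseteq> {vzero M}"
  obtains K where "sub_smod G Ev Od M K" "\<not> S \<subseteq> K"
    "\<And>X. sub_smod G Ev Od M X \<Longrightarrow> K \<subseteq> X \<Longrightarrow> \<not> S \<subseteq> X \<Longrightarrow> X = K"
proof -
  let ?F = "{K. sub_smod G Ev Od M K \<and> \<not> S \<subseteq> K}"
  have "\<exists>K\<in>?F. \<forall>X\<in>?F. K \<subseteq> X \<longrightarrow> X = K"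
  proof (rule Zorn_Lemma2, intro ballI)
    fix C assume "C \<in> chains ?F"
    then have C: "C \<subseteq> ?F" "chain\<^sub>\<subseteq> C" unfolding chains_def by auto
    show "\<exists>U\<in>?F. \<forall>X\<in>C. X \<subseteq> U"
    proof (cases "C = {}")
      case True
      have "{vzero M} \<in> ?F" using sub_smod_zero assms(2) by simp
      then show ?thesis using True by blast
    next
      case False
      have "\<not> S \<subseteq> \<Union>C"
      proof
        assume "S \<subseteq> \<Union>C"
        then obtain X where "X \<in> C" "S \<subseteq> X"
          using finite_subset_Union_chain[OF assms(1) _ False C(2)[unfolded chain_subset_alt_def]]
          by blast
        then show False using C(1) by auto
      qed
      moreover have "sub_smod G Ev Od M (\<Union>C)"
        using sub_smod_Union_chain[OF _ C(2) False] C(1) by auto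
      ultimately have "\<Union>C \<in> ?F" by simp
      then show ?thesis by blast
    qed
  qed
  then obtain K where "K \<in> ?F" and max: "\<forall>X\<in>?F. K \<subseteq> X \<longrightarrow> X = K" by blast
  show ?thesis
  proof (rule that)
    show "sub_smod G Ev Od M K" "\<not> S \<subseteq> K" using \<open>K \<in> ?F\<close> by auto
    show "X = K" if "sub_smod G Ev Od M X" "K \<subseteq> X" "\<not> S \<subseteq> X" for X
      using max that by blast
  qed
qed

lemma hword_exists: "set w \<subseteq> Ev \<union> Od \<Longrightarrow> \<exists>r. hword Ev Od w r"
proof (induction w)
  case Nil
  then show ?case by (intro exI[of _ False]) simp
next
  case (Cons x w)
  then obtain r where r: "hword Ev Od w r" by auto
  obtain q where "x \<in> hpart Ev Od q" using Cons.prems by (cases "x \<in> Ev") (auto intro: that[of False] that[of True])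
  moreover have "((r \<noteq> q) \<noteq> q) = r" by blast
  ultimately have "hword Ev Od (x # w) (r \<noteq> q)" using r by auto
  then show ?case by blast
qed

lemma word_act_hpart:
  assumes "hword Ev Od w r" "a \<in> hpart (spar0 M) (spar1 M) p"
  shows "set w \<subseteq> ssum G Ev Od" "word_act M w a \<in> hpart (spar0 M) (spar1 M) (p \<noteq> r)"
proof -
  have "set w \<subseteq> ssum G Ev Od \<and> word_act M w a \<in> hpart (spar0 M) (spar1 M) (p \<noteq> r)"
    using assms(1)
  proof (induction w arbitrary: r)
    case Nil
    then show ?case using assms(2) by simp
  next
    case (Cons x w)
    then obtain q where q: "x \<in> hpart Ev Od q" "hword Ev Od w (r \<noteq> q)" by auto
    then have IH: "set w \<subseteq> ssum G Ev Od" "word_act M w a \<in> hpart (spar0 M) (spar1 M) (p \<noteq> (r \<noteq> q))"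
      using Cons.IH[OF q(2)] by auto
    have "sact M x (word_act M w a) \<in> hpart (spar0 M) (spar1 M) (q \<noteq> (p \<noteq> (r \<noteq> q)))"
      by (rule sact_hpart[OF q(1) IH(2)])
    moreover have "(q \<noteq> (p \<noteq> (r \<noteq> q))) = (p \<noteq> r)" by blast
    ultimately show ?case using IH(1) q(1) hpart_subset_ssum by auto
  qed
  then show "set w \<subseteq> ssum G Ev Od" "word_act M w a \<in> hpart (spar0 M) (spar1 M) (p \<noteq> r)" by auto
qed

lemma word_core_subset: "word_core M A Q \<subseteq> Q"
proof
  fix v assume "v \<in> word_core M A Q"
  then have "\<forall>w. set w \<subseteq> A \<longrightarrow> word_act M w v \<in> Q" unfolding word_core_def by blast
  from this[rule_format, of "[]"] have "word_act M [] v \<in> Q" by simp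
  then show "v \<in> Q" by simp
qed

lemma sact_word_core:
  assumes "x \<in> A" "A \<subseteq> ssum G Ev Od" "v \<in> word_core M A Q"
  shows "sact M x v \<in> word_core M A Q"
proof -
  have v: "v \<in> vcarrier M" "\<forall>w. set w \<subseteq> A \<longrightarrow> word_act M w v \<in> Q"
    using assms(3) unfolding word_core_def by auto
  have "word_act M w (sact M x v) \<in> Q" if "set w \<subseteq> A" for w
  proof -
    have "set (w @ [x]) \<subseteq> A" using that assms(1) by simp
    then have "word_act M (w @ [x]) v \<in> Q" using v(2) by blast
    then show ?thesis by simp
  qed
  moreover have "sact M x v \<in> vcarrier M" using assms(1,2) v(1) by (simp add: subset_iff)
  ultimately show ?thesis unfolding word_core_def by blast
qed

lemma csubspace_word_core:
  assumes A: "A \<subseteq> ssum G Ev Od" and Q: "csubspace M Q"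
  shows "csubspace M (word_core M A Q)"
  unfolding csubspace_def
proof (intro conjI ballI allI)
  have wA: "set w \<subseteq> ssum G Ev Od" if "set w \<subseteq> A" for w using that A by blast
  show "word_core M A Q \<subseteq> vcarrier M" unfolding word_core_def by blast
  show "vzero M \<in> word_core M A Q"
    unfolding word_core_def using csubspaceD(2)[OF Q] wA by simp
  show "vadd M u v \<in> word_core M A Q" if u: "u \<in> word_core M A Q" and v: "v \<in> word_core M A Q" for u v
  proof -
    have "word_act M w (vadd M u v) \<in> Q" if w: "set w \<subseteq> A" for w
    proof -
      have "word_act M w u \<in> Q" "word_act M w v \<in> Q" "u \<in> vcarrier M" "v \<in> vcarrier M"
        using u v w unfolding word_core_def by auto
      then show ?thesis using word_act_add[OF wA[OF w]] csubspaceD(3)[OF Q] by simp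
    qed
    then show ?thesis using u v unfolding word_core_def by auto
  qed
  show "vsmult M a u \<in> word_core M A Q" if u: "u \<in> word_core M A Q" for a u
  proof -
    have "word_act M w (vsmult M a u) \<in> Q" if w: "set w \<subseteq> A" for w
    proof -
      have "word_act M w u \<in> Q" "u \<in> vcarrier M" using u w unfolding word_core_def by auto
      then show ?thesis using word_act_smult[OF wA[OF w]] csubspaceD(4)[OF Q] by simp
    qed
    then show ?thesis using u unfolding word_core_def by auto
  qed
qed

lemma graded_word_core:
  assumes A: "A \<subseteq> Ev \<union> Od" and Q: "graded_subset M Q"
  shows "graded_subset M (word_core M A Q)"
  unfolding graded_subset_def
proof (intro ballI allI impI)
  fix u a b assume u: "u \<in> word_core M A Q" and ab: "a \<in> spar0 M" "b \<in> spar1 M" "u = vadd M a b"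
  have C: "a \<in> vcarrier M" "b \<in> vcarrier M" using ab csubspace_spar[THEN csubspaceD(1)] by auto
  have "word_act M w a \<in> Q \<and> word_act M w b \<in> Q" if w: "set w \<subseteq> A" for w
  proof -
    obtain r where r: "hword Ev Od w r" using hword_exists w A by blast
    have a: "word_act M w a \<in> hpart (spar0 M) (spar1 M) r"
      using word_act_hpart(2)[OF r, of a False] ab(1) by simp
    have b: "word_act M w b \<in> hpart (spar0 M) (spar1 M) (\<not> r)"
      using word_act_hpart(2)[OF r, of b True] ab(2) by simp
    have "word_act M w u \<in> Q" using u w unfolding word_core_def by blast
    then have "vadd M (word_act M w a) (word_act M w b) \<in> Q"
      using word_act_add[OF word_act_hpart(1)[OF r, of a False] C] ab(1,3) by simp
    then show ?thesis using graded_split[OF Q a b] by blast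
  qed
  then show "a \<in> word_core M A Q \<and> b \<in> word_core M A Q"
    using C unfolding word_core_def by blast
qed

lemma simple_smod_even_part:
  assumes simple: "simple_smod G br Ev Od M"
    and trivial: "\<forall>x\<in>Od. \<forall>v\<in>vcarrier M. sact M x v = vzero M"
  shows "simple_smod G br Ev {vzero G} M"
proof -
  have EC: "Ev \<subseteq> vcarrier G" and OC: "Od \<subseteq> vcarrier G"
    using csubspace_Ev csubspace_Od by (auto dest: csubspaceD(1))
  have z: "{vzero G} \<subseteq> Od" using csubspaceD(2)[OF csubspace_Od] by auto
  have "sub_smod G Ev Od M W" if W: "sub_smod G Ev {vzero G} M W" for W
  proof -
    have WC: "W \<subseteq> vcarrier M" using W unfolding sub_smod_iff by (blast dest: csubspaceD(1))
    have Wst: "\<forall>x\<in>ssum G Ev {vzero G}. \<forall>w\<in>W. sact M x w \<in> W" using W unfolding sub_smod_iff by blast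
    have "sact M x w \<in> W" if x: "x \<in> ssum G Ev Od" and w: "w \<in> W" for x w
    proof -
      obtain e d where ed: "e \<in> Ev" "d \<in> Od" "x = vadd G e d" using x unfolding ssum_def by blast
      have e: "e \<in> ssum G Ev Od" "d \<in> ssum G Ev Od"
        using ed hpart_subset_ssum[of False] hpart_subset_ssum[of True] by auto
      have wC: "w \<in> vcarrier M" using w WC by blast
      have "sact M x w = vadd M (sact M e w) (sact M d w)"
        using sact_lincomb_left[OF e wC, of 1 1] ed EC OC e wC by (simp add: subset_iff)
      also have "\<dots> = sact M e w" using trivial ed(2) wC e(1) by simp
      finally have "sact M x w = sact M e w" .
      moreover have "e = vadd G e (vzero G)" using ed(1) EC by auto
      then have "e \<in> ssum G Ev {vzero G}" using ed(1) unfolding ssum_def by blast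
      ultimately show ?thesis using Wst w by simp
    qed
    then show ?thesis using W unfolding sub_smod_iff by blast
  qed
  moreover have "smod G br Ev {vzero G} M" using smod_mono[OF subset_refl z smod] .
  ultimately show ?thesis using simple unfolding simple_smod_def by blast
qed

end

section \<open>Quotient supermodules\<close>

definition coset :: "('a, 'b) cvs_scheme \<Rightarrow> 'a set \<Rightarrow> 'a \<Rightarrow> 'a set" where
  "coset V K v = {vadd V v k | k. k \<in> K}"

text \<open>The quotient \<open>M/K\<close>, with the cosets of \<open>K\<close> as elements; the operations are
  defined on representatives by taking unions over a coset.\<close>
definition quot_smod :: "('m, 'g) smod \<Rightarrow> 'm set \<Rightarrow> ('m set, 'g) smod" where
  "quot_smod M K =
     \<lparr> vcarrier = coset M K ` vcarrier M,
       vadd = (\<lambda>A B. \<Union>a\<in>A. \<Union>b\<in>B. coset M K (vadd M a b)),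
       vsmult = (\<lambda>c A. \<Union>a\<in>A. coset M K (vsmult M c a)),
       vzero = K,
       spar0 = coset M K ` spar0 M,
       spar1 = coset M K ` spar1 M,
       sact = (\<lambda>x A. \<Union>a\<in>A. coset M K (sact M x a)) \<rparr>"

locale supermodule_quotient = supermodule +
  fixes K :: "'m set"
  assumes sub_K: "sub_smod G Ev Od M K"
begin

abbreviation "N \<equiv> quot_smod M K"

lemma quot_simps:
  "vcarrier N = coset M K ` vcarrier M" "vzero N = K"
  "spar0 N = coset M K ` spar0 M" "spar1 N = coset M K ` spar1 M"
  by (simp_all add: quot_smod_def)

lemma csubspace_K: "csubspace M K"
  using sub_K unfolding sub_smod_iff by blast

lemma K_subset: "K \<subseteq> vcarrier M"
  using csubspaceD(1)[OF csubspace_K] .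

lemma K_closed: "vzero M \<in> K" "k \<in> K \<Longrightarrow> k' \<in> K \<Longrightarrow> vadd M k k' \<in> K"
  "k \<in> K \<Longrightarrow> vsmult M a k \<in> K"
  using csubspaceD(2-4)[OF csubspace_K] by auto

lemma sact_K: "x \<in> ssum G Ev Od \<Longrightarrow> k \<in> K \<Longrightarrow> sact M x k \<in> K"
  using sub_K unfolding sub_smod_iff by blast

lemma coset_self: "v \<in> vcarrier M \<Longrightarrow> v \<in> coset M K v"
  unfolding coset_def using K_closed(1) by force

lemma coset_add_K: 
  assumes "v \<in> vcarrier M" "k \<in> K"
  shows "coset M K (vadd M v k) = coset M K v"
proof
  have kC: "k \<in> vcarrier M" using assms(2) K_subset by blast
  show "coset M K (vadd M v k) \<subseteq> coset M K v"
  proof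
    fix u assume "u \<in> coset M K (vadd M v k)"
    then obtain k' where k': "k' \<in> K" "u = vadd M (vadd M v k) k'" unfolding coset_def by blast
    then have "u = vadd M v (vadd M k k')" using assms(1) kC K_subset by (simp add: add_assoc subset_iff)
    then show "u \<in> coset M K v" unfolding coset_def using K_closed(2)[OF assms(2) k'(1)] by blast
  qed
  show "coset M K v \<subseteq> coset M K (vadd M v k)"
  proof
    fix u assume "u \<in> coset M K v"
    then obtain k' where k': "k' \<in> K" "u = vadd M v k'" unfolding coset_def by blast
    have k'C: "k' \<in> vcarrier M" using k'(1) K_subset by blast
    have "vadd M k (vadd M (vsmult M (-1) k) k') = k'"
      using kC k'C by (simp flip: add_assoc)
    then have "u = vadd M (vadd M v k) (vadd M (vsmult M (-1) k) k')"
      using k' kC k'C assms(1) by (simp add: add_assoc)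
    moreover have "vadd M (vsmult M (-1) k) k' \<in> K" using K_closed assms(2) k'(1) by blast
    ultimately show "u \<in> coset M K (vadd M v k)" unfolding coset_def by blast
  qed
qed

lemma coset_eq_iff:
  assumes "u \<in> vcarrier M" "v \<in> vcarrier M"
  shows "coset M K u = coset M K v \<longleftrightarrow> (\<exists>k\<in>K. u = vadd M v k)"
proof
  assume "coset M K u = coset M K v"
  then have "u \<in> coset M K v" using coset_self[OF assms(1)] by simp
  then show "\<exists>k\<in>K. u = vadd M v k" unfolding coset_def by blast
next
  assume "\<exists>k\<in>K. u = vadd M v k"
  then show "coset M K u = coset M K v" using coset_add_K[OF assms(2)] by blast
qed

lemma coset_zero: "coset M K (vzero M) = K"
  unfolding coset_def using K_subset by force

lemma coset_eq_K_iff: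
  assumes "v \<in> vcarrier M"
  shows "coset M K v = K \<longleftrightarrow> v \<in> K"
proof
  show "coset M K v = K \<Longrightarrow> v \<in> K" using coset_self[OF assms] by simp
  assume "v \<in> K"
  then have "coset M K (vadd M (vzero M) v) = coset M K (vzero M)" by (intro coset_add_K) simp_all
  then show "coset M K v = K" using assms coset_zero by simp
qed

lemma Union_coset_image:
  assumes v: "v \<in> vcarrier M" and fv: "f v \<in> vcarrier M"
    and f: "\<forall>k\<in>K. \<exists>k'\<in>K. f (vadd M v k) = vadd M (f v) k'"
  shows "(\<Union>a\<in>coset M K v. coset M K (f a)) = coset M K (f v)"
proof
  show "(\<Union>a\<in>coset M K v. coset M K (f a)) \<subseteq> coset M K (f v)"
  proof
    fix u assume "u \<in> (\<Union>a\<in>coset M K v. coset M K (f a))"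
    then obtain k where k: "k \<in> K" "u \<in> coset M K (f (vadd M v k))" unfolding coset_def by blast
    then obtain k' where "k' \<in> K" "f (vadd M v k) = vadd M (f v) k'" using f by blast
    then show "u \<in> coset M K (f v)" using k(2) coset_add_K[OF fv] by simp
  qed
  show "coset M K (f v) \<subseteq> (\<Union>a\<in>coset M K v. coset M K (f a))"
    using coset_self[OF v] by blast
qed

lemma quot_carrierE:
  assumes "X \<in> vcarrier N"
  obtains v where "v \<in> vcarrier M" "X = coset M K v"
  using assms unfolding quot_simps by blast

lemma coset_in_quot [simp]: "v \<in> vcarrier M \<Longrightarrow> coset M K v \<in> vcarrier N"
  unfolding quot_simps by blast

lemma quot_add_coset:
  assumes u: "u \<in> vcarrier M" and v: "v \<in> vcarrier M"
  shows "vadd N (coset M K u) (coset M K v) = coset M K (vadd M u v)"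
proof -
  have right: "(\<Union>b\<in>coset M K v. coset M K (vadd M a b)) = coset M K (vadd M a v)"
    if a: "a \<in> vcarrier M" for a
  proof (rule Union_coset_image[OF v])
    show "\<forall>k\<in>K. \<exists>k'\<in>K. vadd M a (vadd M v k) = vadd M (vadd M a v) k'"
    proof
      fix k assume "k \<in> K"
      then have "vadd M a (vadd M v k) = vadd M (vadd M a v) k"
        using a v K_subset by (simp add: add_assoc subset_iff)
      then show "\<exists>k'\<in>K. vadd M a (vadd M v k) = vadd M (vadd M a v) k'" using \<open>k \<in> K\<close> by blast
    qed
  qed (use a v in simp)
  have left: "(\<Union>a\<in>coset M K u. coset M K (vadd M a v)) = coset M K (vadd M u v)"
  proof (rule Union_coset_image[OF u])
    show "\<forall>k\<in>K. \<exists>k'\<in>K. vadd M (vadd M u k) v = vadd M (vadd M u v) k'"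
    proof
      fix k assume "k \<in> K"
      then have "vadd M (vadd M u k) v = vadd M (vadd M u v) k"
        using u v K_subset by (simp add: add_assoc add_commute[of k v] subset_iff)
      then show "\<exists>k'\<in>K. vadd M (vadd M u k) v = vadd M (vadd M u v) k'" using \<open>k \<in> K\<close> by blast
    qed
  qed (use u v in simp)
  have "coset M K u \<subseteq> vcarrier M"
    using u K_subset unfolding coset_def by (auto intro!: add_closed)
  then have "(\<Union>a\<in>coset M K u. \<Union>b\<in>coset M K v. coset M K (vadd M a b)) = coset M K (vadd M u v)"
    using right left by (simp add: subset_iff)
  then show ?thesis unfolding quot_smod_def by simp
qed

lemma Union_coset_additive:
  assumes v: "v \<in> vcarrier M" and f_closed: "\<forall>u\<in>vcarrier M. f u \<in> vcarrier M"
    and f_add: "\<forall>u\<in>vcarrier M. \<forall>w\<in>vcarrier M. f (vadd M u w) = vadd M (f u) (f w)"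
    and f_K: "\<forall>k\<in>K. f k \<in> K"
  shows "(\<Union>a\<in>coset M K v. coset M K (f a)) = coset M K (f v)"
proof (rule Union_coset_image[OF v])
  show "\<forall>k\<in>K. \<exists>k'\<in>K. f (vadd M v k) = vadd M (f v) k'"
    using f_add f_K v K_subset by blast
qed (use v f_closed in blast)

lemma quot_smult_coset:
  "v \<in> vcarrier M \<Longrightarrow> vsmult N c (coset M K v) = coset M K (vsmult M c v)"
  using Union_coset_additive[of v "vsmult M c"] K_closed(3) smult_add_right
  unfolding quot_smod_def by simp

lemma quot_sact_coset:
  "x \<in> ssum G Ev Od \<Longrightarrow> v \<in> vcarrier M \<Longrightarrow> sact N x (coset M K v) = coset M K (sact M x v)"
  using Union_coset_additive[of v "sact M x"] sact_K sact_add_right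
  unfolding quot_smod_def by simp

lemma cvs_quot: "cvs N"
  unfolding cvs_def
proof (intro conjI ballI allI)
  show "vzero N \<in> vcarrier N" using coset_in_quot[OF zero_closed] by (simp add: coset_zero quot_simps)
next
  fix X Y Z a b assume "X \<in> vcarrier N" "Y \<in> vcarrier N" "Z \<in> vcarrier N"
  then obtain x y z where xyz: "x \<in> vcarrier M" "y \<in> vcarrier M" "z \<in> vcarrier M"
    and XYZ: "X = coset M K x" "Y = coset M K y" "Z = coset M K z"
    by (metis quot_carrierE)
  show "vadd N X Y \<in> vcarrier N" using xyz by (simp add: XYZ quot_add_coset)
  show "vadd N X Y = vadd N Y X" using xyz by (simp add: XYZ quot_add_coset add_commute)
  show "vadd N (vadd N X Y) Z = vadd N X (vadd N Y Z)"
    using xyz by (simp add: XYZ quot_add_coset add_assoc)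
  show "vsmult N a (vadd N X Y) = vadd N (vsmult N a X) (vsmult N a Y)"
    using xyz by (simp add: XYZ quot_add_coset quot_smult_coset smult_add_right)
next
  fix X a b assume "X \<in> vcarrier N"
  then obtain x where x: "x \<in> vcarrier M" and X: "X = coset M K x" by (rule quot_carrierE)
  show "vsmult N a X \<in> vcarrier N" using x by (simp add: X quot_smult_coset)
  show "vadd N (vzero N) X = X"
    using x quot_add_coset[OF zero_closed x] by (simp add: X coset_zero quot_simps)
  show "\<exists>Y\<in>vcarrier N. vadd N X Y = vzero N"
    using x quot_add_coset[OF x smult_closed[OF x, of "-1"]]
    by (intro bexI[of _ "coset M K (vsmult M (-1) x)"]) (simp_all add: X coset_zero quot_simps)
  show "vsmult N (a + b) X = vadd N (vsmult N a X) (vsmult N b X)"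
    using x by (simp add: X quot_add_coset quot_smult_coset smult_add_left)
  show "vsmult N (a * b) X = vsmult N a (vsmult N b X)"
    using x by (simp add: X quot_smult_coset smult_smult)
  show "vsmult N 1 X = X" using x by (simp add: X quot_smult_coset)
qed

sublocale quot: vspace N
  by unfold_locales (rule cvs_quot)

lemma csubspace_coset_image: "csubspace M P \<Longrightarrow> csubspace N (coset M K ` P)"
proof -
  assume P: "csubspace M P"
  note PC = csubspaceD(1)[OF P]
  show ?thesis unfolding csubspace_def
  proof (intro conjI ballI allI)
    show "coset M K ` P \<subseteq> vcarrier N" using PC unfolding quot_simps by blast
    have "vzero N = coset M K (vzero M)" using coset_zero quot_simps by simp
    then show "vzero N \<in> coset M K ` P" using csubspaceD(2)[OF P] by blast
  next
    fix X Y assume "X \<in> coset M K ` P" "Y \<in> coset M K ` P"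
    then obtain x y where xy: "x \<in> P" "y \<in> P" and "X = coset M K x" "Y = coset M K y" by blast
    then have "vadd N X Y = coset M K (vadd M x y)" using PC quot_add_coset by blast
    then show "vadd N X Y \<in> coset M K ` P" using csubspaceD(3)[OF P xy] by blast
  next
    fix a X assume "X \<in> coset M K ` P"
    then obtain x where x: "x \<in> P" and "X = coset M K x" by blast
    then have "vsmult N a X = coset M K (vsmult M a x)" using PC quot_smult_coset by blast
    then show "vsmult N a X \<in> coset M K ` P" using csubspaceD(4)[OF P x] by blast
  qed
qed

lemma coset_parity_unique:
  assumes a: "a \<in> spar0 M" "a' \<in> spar0 M" and b: "b \<in> spar1 M" "b' \<in> spar1 M"
    and eq: "coset M K (vadd M a b) = coset M K (vadd M a' b')"
  shows "coset M K a = coset M K a'" "coset M K b = coset M K b'"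
proof -
  have C: "a \<in> vcarrier M" "a' \<in> vcarrier M" "b \<in> vcarrier M" "b' \<in> vcarrier M"
    using a b csubspace_spar[THEN csubspaceD(1)] by auto
  obtain k where k: "k \<in> K" "vadd M a b = vadd M (vadd M a' b') k"
    using eq coset_eq_iff C by auto
  obtain k0 k1 where kk: "k0 \<in> spar0 M" "k1 \<in> spar1 M" "k = vadd M k0 k1"
    using parity_decomp k(1) K_subset by blast
  have k01: "k0 \<in> K" "k1 \<in> K"
    using sub_K kk k(1) unfolding sub_smod_iff graded_subset_def by blast+
  have kC: "k0 \<in> vcarrier M" "k1 \<in> vcarrier M" using k01 K_subset by auto
  have "vadd M a b = vadd M (vadd M a' k0) (vadd M b' k1)"
    using k(2) kk(3) C kC by (simp add: add_add_swap)
  moreover have "vadd M a' k0 \<in> spar0 M" "vadd M b' k1 \<in> spar1 M"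
    using csubspace_spar[THEN csubspaceD(3)] a(2) b(2) kk(1,2) by auto
  moreover have "vadd M a b \<in> vcarrier M" using C by simp
  ultimately have "a = vadd M a' k0" "b = vadd M b' k1"
    using dsum_unique[OF dsum_parity a(1) _ b(1)] by blast+
  then show "coset M K a = coset M K a'" "coset M K b = coset M K b'"
    using coset_add_K[OF C(2) k01(1)] coset_add_K[OF C(4) k01(2)] by simp_all
qed

lemma dsum_quot: "dsum N (spar0 N) (spar1 N) (vcarrier N)"
  unfolding dsum_def
proof (intro conjI ballI)
  show cs: "csubspace N (spar0 N)" "csubspace N (spar1 N)"
    unfolding quot_simps using csubspace_spar by (auto intro: csubspace_coset_image)
  show "ssum N (spar0 N) (spar1 N) \<subseteq> vcarrier N"
    using cs[THEN csubspaceD(1)] unfolding ssum_def by (auto intro!: quot.add_closed)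
next
  fix X assume "X \<in> vcarrier N"
  then obtain v where v: "v \<in> vcarrier M" "X = coset M K v" by (rule quot_carrierE)
  obtain a b where ab: "a \<in> spar0 M" "b \<in> spar1 M" "v = vadd M a b" by (rule parity_decomp[OF v(1)])
  have abC: "a \<in> vcarrier M" "b \<in> vcarrier M" using ab csubspace_spar[THEN csubspaceD(1)] by auto
  show "\<exists>!p. fst p \<in> spar0 N \<and> snd p \<in> spar1 N \<and> X = vadd N (fst p) (snd p)"
  proof (rule ex1I[of _ "(coset M K a, coset M K b)"])
    show "fst (coset M K a, coset M K b) \<in> spar0 N \<and> snd (coset M K a, coset M K b) \<in> spar1 N \<and>
        X = vadd N (fst (coset M K a, coset M K b)) (snd (coset M K a, coset M K b))"
      using ab abC v quot_add_coset by (simp add: quot_simps)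
  next
    fix p assume p: "fst p \<in> spar0 N \<and> snd p \<in> spar1 N \<and> X = vadd N (fst p) (snd p)"
    then obtain a' b' where a'b': "a' \<in> spar0 M" "b' \<in> spar1 M"
      and "fst p = coset M K a'" "snd p = coset M K b'"
      unfolding quot_simps by blast
    then have a'b'p: "p = (coset M K a', coset M K b')" by (simp add: prod_eq_iff)
    have "a' \<in> vcarrier M" "b' \<in> vcarrier M"
      using a'b' csubspace_spar[THEN csubspaceD(1)] by auto
    then have "coset M K (vadd M a b) = coset M K (vadd M a' b')"
      using p v ab a'b'p quot_add_coset by simp
    then show "p = (coset M K a, coset M K b)"
      using coset_parity_unique[OF ab(1) a'b'(1) ab(2) a'b'(2)] a'b'p by simp
  qed
qed

lemma hpart_quot: "hpart (spar0 N) (spar1 N) q = coset M K ` hpart (spar0 M) (spar1 M) q"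
  by (cases q) (simp_all add: quot_simps)

text \<open>The operators of the two remaining module axioms, \<open>a x + b y\<close> and \<open>[x, y]\<close>, need not
  lie in \<open>Ev \<oplus> Od\<close>; they descend to the quotient because they are additive and preserve
  \<open>K\<close>, which the axioms themselves show.\<close>
lemma smod_quot: "smod G br Ev Od N"
  unfolding smod_def
proof (intro conjI cvs_quot dsum_quot ballI allI impI)
  fix x V assume x: "x \<in> ssum G Ev Od" and "V \<in> vcarrier N"
  then obtain v where "v \<in> vcarrier M" "V = coset M K v" by (metis quot_carrierE)
  then show "sact N x V \<in> vcarrier N" using x by (simp add: quot_sact_coset)
next
  fix x a b V W assume x: "x \<in> ssum G Ev Od" and "V \<in> vcarrier N" "W \<in> vcarrier N"
  then obtain v w where vw: "v \<in> vcarrier M" "w \<in> vcarrier M" "V = coset M K v" "W = coset M K w"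
    by (metis quot_carrierE)
  show "sact N x (vadd N (vsmult N a V) (vsmult N b W)) =
      vadd N (vsmult N a (sact N x V)) (vsmult N b (sact N x W))"
    using x vw by (simp add: quot_smult_coset quot_add_coset quot_sact_coset sact_lincomb_right)
next
  fix x y a b V assume x: "x \<in> ssum G Ev Od" and y: "y \<in> ssum G Ev Od" and "V \<in> vcarrier N"
  then obtain v where v: "v \<in> vcarrier M" "V = coset M K v" by (metis quot_carrierE)
  let ?z = "vadd G (vsmult G a x) (vsmult G b y)"
  have z_closed: "\<forall>u\<in>vcarrier M. sact M ?z u \<in> vcarrier M"
    using x y by (simp add: sact_lincomb_left)
  have z_add: "\<forall>u\<in>vcarrier M. \<forall>w\<in>vcarrier M. sact M ?z (vadd M u w) = vadd M (sact M ?z u) (sact M ?z w)"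
    using x y by (simp add: sact_lincomb_left sact_add_right smult_add_right add_add_swap)
  have z_K: "\<forall>k\<in>K. sact M ?z k \<in> K"
    using x y K_subset sact_K K_closed by (simp add: sact_lincomb_left subset_iff)
  have "sact N ?z V = coset M K (sact M ?z v)"
    using Union_coset_additive[OF v(1) z_closed z_add z_K] v(2) unfolding quot_smod_def by simp
  then show "sact N ?z V = vadd N (vsmult N a (sact N x V)) (vsmult N b (sact N y V))"
    using x y v by (simp add: sact_lincomb_left quot_smult_coset quot_add_coset quot_sact_coset)
next
  fix p q x V assume x: "x \<in> hpart Ev Od p" and "V \<in> hpart (spar0 N) (spar1 N) q"
  then obtain v where v: "v \<in> hpart (spar0 M) (spar1 M) q" "V = coset M K v"
    unfolding hpart_quot by blast
  have "sact N x V = coset M K (sact M x v)"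
    using v x hpart_subset_ssum hpart_subset_carrier quot_sact_coset by blast
  then show "sact N x V \<in> hpart (spar0 N) (spar1 N) (p \<noteq> q)"
    unfolding hpart_quot using sact_hpart[OF x v(1)] by blast
next
  fix p q x y V assume "V \<in> vcarrier N" and x: "x \<in> hpart Ev Od p" and y: "y \<in> hpart Ev Od q"
  then obtain v where v: "v \<in> vcarrier M" "V = coset M K v" by (metis quot_carrierE)
  have xy: "x \<in> ssum G Ev Od" "y \<in> ssum G Ev Od" using x y hpart_subset_ssum by auto
  have b_closed: "\<forall>u\<in>vcarrier M. sact M (br x y) u \<in> vcarrier M"
    using xy by (simp add: sact_bracket[OF x y])
  have b_add: "\<forall>u\<in>vcarrier M. \<forall>w\<in>vcarrier M.
      sact M (br x y) (vadd M u w) = vadd M (sact M (br x y) u) (sact M (br x y) w)"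
    using xy by (simp add: sact_bracket[OF x y] sact_add_right smult_add_right add_add_swap)
  have b_K: "\<forall>k\<in>K. sact M (br x y) k \<in> K"
    using xy K_subset sact_K K_closed by (simp add: sact_bracket[OF x y] subset_iff)
  have "sact N (br x y) V = coset M K (sact M (br x y) v)"
    using Union_coset_additive[OF v(1) b_closed b_add b_K] v(2) unfolding quot_smod_def by simp
  then show "sact N (br x y) V =
      vadd N (sact N x (sact N y V)) (vsmult N (- ssgn p q) (sact N y (sact N x V)))"
    using xy v by (simp add: sact_bracket[OF x y] quot_smult_coset quot_add_coset quot_sact_coset)
qed

lemma sub_smod_preimage:
  assumes W: "sub_smod G Ev Od N W"
  shows "sub_smod G Ev Od M {v \<in> vcarrier M. coset M K v \<in> W}" (is "sub_smod _ _ _ _ ?W'")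
    and "K \<subseteq> {v \<in> vcarrier M. coset M K v \<in> W}"
proof -
  have csW: "csubspace N W" and grW: "graded_subset N W"
    and stW: "\<And>x X. x \<in> ssum G Ev Od \<Longrightarrow> X \<in> W \<Longrightarrow> sact N x X \<in> W"
    using W unfolding sub_smod_iff by auto
  have "csubspace M ?W'"
    unfolding csubspace_def
  proof (intro conjI ballI allI)
    show "?W' \<subseteq> vcarrier M" by blast
    show "vzero M \<in> ?W'" using csubspaceD(2)[OF csW] coset_zero by (simp add: quot_simps)
    show "vadd M u v \<in> ?W'" if "u \<in> ?W'" "v \<in> ?W'" for u v
      using that csubspaceD(3)[OF csW, of "coset M K u" "coset M K v"] quot_add_coset by simp
    show "vsmult M a u \<in> ?W'" if "u \<in> ?W'" for a u
      using that csubspaceD(4)[OF csW, of "coset M K u"] quot_smult_coset by simp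
  qed
  moreover have "graded_subset M ?W'"
    unfolding graded_subset_def
  proof (intro ballI allI impI)
    fix u a b assume u: "u \<in> ?W'" and ab: "a \<in> spar0 M" "b \<in> spar1 M" "u = vadd M a b"
    have C: "a \<in> vcarrier M" "b \<in> vcarrier M" using ab csubspace_spar[THEN csubspaceD(1)] by auto
    have "vadd N (coset M K a) (coset M K b) \<in> W" using u ab C quot_add_coset by simp
    moreover have "coset M K a \<in> spar0 N" "coset M K b \<in> spar1 N" using ab by (simp_all add: quot_simps)
    ultimately have "coset M K a \<in> W" "coset M K b \<in> W"
      using grW unfolding graded_subset_def by blast+
    then show "a \<in> ?W' \<and> b \<in> ?W'" using C by simp
  qed
  moreover have "\<forall>x\<in>ssum G Ev Od. \<forall>u\<in>?W'. sact M x u \<in> ?W'"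
  proof (intro ballI)
    fix x u assume "x \<in> ssum G Ev Od" "u \<in> ?W'"
    then show "sact M x u \<in> ?W'" using stW[of x "coset M K u"] quot_sact_coset by simp
  qed
  ultimately show "sub_smod G Ev Od M ?W'" unfolding sub_smod_iff by blast
  show "K \<subseteq> ?W'"
  proof
    fix k assume k: "k \<in> K"
    then have "k \<in> vcarrier M" "coset M K k = K" using K_subset coset_eq_K_iff by auto
    then show "k \<in> ?W'" using csubspaceD(2)[OF csW] by (simp add: quot_simps)
  qed
qed

lemma simple_smod_quot:
  assumes "maximal_sub_smod G Ev Od M K"
  shows "simple_smod G br Ev Od N"
proof -
  have proper: "K \<noteq> vcarrier M"
    and maximal: "\<And>X. sub_smod G Ev Od M X \<Longrightarrow> K \<subseteq> X \<Longrightarrow> X = K \<or> X = vcarrier M"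
    using assms unfolding maximal_sub_smod_def by auto
  have "vcarrier N \<noteq> {vzero N}"
  proof
    assume triv: "vcarrier N = {vzero N}"
    obtain v where "v \<in> vcarrier M" "v \<notin> K" using proper K_subset by blast
    moreover from \<open>v \<in> vcarrier M\<close> have "coset M K v = K" using triv by (auto simp: quot_simps)
    ultimately show False using coset_eq_K_iff by blast
  qed
  moreover have "W = {vzero N} \<or> W = vcarrier N" if W: "sub_smod G Ev Od N W" for W
  proof -
    have WC: "W \<subseteq> vcarrier N" and "vzero N \<in> W"
      using W csubspaceD(1,2) unfolding sub_smod_iff by auto
    consider "{v \<in> vcarrier M. coset M K v \<in> W} = K" | "{v \<in> vcarrier M. coset M K v \<in> W} = vcarrier M"
      using maximal sub_smod_preimage[OF W] by blast
    then show ?thesis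
    proof cases
      case 1
      then have "W \<subseteq> {vzero N}" using WC coset_eq_K_iff by (auto simp: quot_simps)
      then show ?thesis using \<open>vzero N \<in> W\<close> by blast
    next
      case 2
      then have "vcarrier N \<subseteq> W" by (auto simp: quot_simps)
      then show ?thesis using WC by blast
    qed
  qed
  ultimately show ?thesis unfolding simple_smod_def using smod_quot by blast
qed

lemma smod_hom_coset: "smod_hom G Ev Od M N (coset M K)"
  unfolding smod_hom_def
  by (simp add: quot_simps quot_add_coset quot_smult_coset quot_sact_coset csubspace_spar[THEN csubspaceD(1)]
      image_mono)

end

section \<open>Supermodules over a Lie superalgebra\<close>

locale lie_supermodule = supermodule +
  assumes lie: "lie_salg G br Ev Od"
begin

lemma carrier_eq_ssum: "vcarrier G = ssum G Ev Od"
proof -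
  have "dsum G Ev Od (vcarrier G)" using lie unfolding lie_salg_def by (elim conjE) assumption
  then show ?thesis by (rule dsum_eq_ssum)
qed

lemma bracket_hpart: "x \<in> hpart Ev Od p \<Longrightarrow> y \<in> hpart Ev Od q \<Longrightarrow> br x y \<in> hpart Ev Od (p \<noteq> q)"
proof -
  have "\<forall>p q x y. x \<in> hpart Ev Od p \<longrightarrow> y \<in> hpart Ev Od q \<longrightarrow> br x y \<in> hpart Ev Od (p \<noteq> q)"
    using lie unfolding lie_salg_def by (elim conjE) assumption
  then show "x \<in> hpart Ev Od p \<Longrightarrow> y \<in> hpart Ev Od q \<Longrightarrow> br x y \<in> hpart Ev Od (p \<noteq> q)" by blast
qed

lemma bracket_antisym:
  "x \<in> hpart Ev Od p \<Longrightarrow> y \<in> hpart Ev Od q \<Longrightarrow> br x y = vsmult G (- ssgn p q) (br y x)"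
proof -
  have "\<forall>p q x y. x \<in> hpart Ev Od p \<longrightarrow> y \<in> hpart Ev Od q \<longrightarrow> br x y = vsmult G (- ssgn p q) (br y x)"
    using lie unfolding lie_salg_def by (elim conjE) assumption
  then show "x \<in> hpart Ev Od p \<Longrightarrow> y \<in> hpart Ev Od q \<Longrightarrow> br x y = vsmult G (- ssgn p q) (br y x)"
    by blast
qed

lemma sact_add_left:
  assumes "x \<in> vcarrier G" "y \<in> vcarrier G" "v \<in> vcarrier M"
  shows "sact M (vadd G x y) v = vadd M (sact M x v) (sact M y v)"
proof -
  have "x \<in> ssum G Ev Od" "y \<in> ssum G Ev Od" using assms(1,2) by (simp_all flip: carrier_eq_ssum)
  then have "sact M (vadd G (vsmult G 1 x) (vsmult G 1 y)) v =
      vadd M (vsmult M 1 (sact M x v)) (vsmult M 1 (sact M y v))"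
    using assms(3) by (rule sact_lincomb_left)
  then show ?thesis using assms \<open>x \<in> ssum G Ev Od\<close> \<open>y \<in> ssum G Ev Od\<close> by simp
qed

lemma sact_smult_left:
  assumes "x \<in> vcarrier G" "v \<in> vcarrier M"
  shows "sact M (vsmult G a x) v = vsmult M a (sact M x v)"
proof -
  have "x \<in> ssum G Ev Od" "vzero G \<in> ssum G Ev Od" using assms(1) by (simp_all flip: carrier_eq_ssum)
  then have "sact M (vadd G (vsmult G a x) (vsmult G 0 (vzero G))) v =
      vadd M (vsmult M a (sact M x v)) (vsmult M 0 (sact M (vzero G) v))"
    using assms(2) by (rule sact_lincomb_left)
  then show ?thesis using assms \<open>x \<in> ssum G Ev Od\<close> \<open>vzero G \<in> ssum G Ev Od\<close> by simp
qed

lemma sact_zero_left [simp]: "v \<in> vcarrier M \<Longrightarrow> sact M (vzero G) v = vzero M"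
proof -
  assume v: "v \<in> vcarrier M"
  have "vzero G \<in> ssum G Ev Od" by (simp flip: carrier_eq_ssum)
  then show ?thesis using sact_smult_left[of "vzero G" v 0] v by simp
qed

lemma word_act_in_carrier:
  "set w \<subseteq> vcarrier G \<Longrightarrow> v \<in> vcarrier M \<Longrightarrow> word_act M w v \<in> vcarrier M"
  using word_act_closed by (simp add: carrier_eq_ssum)

text \<open>The defining relation of a supermodule, solved for \<open>x (y v)\<close>.\<close>
lemma sact_sact_swap:
  assumes x: "x \<in> hpart Ev Od p" and y: "y \<in> hpart Ev Od q" and v: "v \<in> vcarrier M"
  shows "sact M x (sact M y v) = vadd M (sact M (br x y) v) (vsmult M (ssgn p q) (sact M y (sact M x v)))"
proof -
  have C: "x \<in> ssum G Ev Od" "y \<in> ssum G Ev Od" using x y hpart_subset_ssum by auto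
  let ?a = "sact M x (sact M y v)" and ?b = "vsmult M (- ssgn p q) (sact M y (sact M x v))"
  have "?a = vadd M (vadd M ?a ?b) (vsmult M (-1) ?b)" using C v by (simp add: add_sub_cancel)
  also have "vadd M ?a ?b = sact M (br x y) v" using sact_bracket[OF x y v] by simp
  also have "vsmult M (-1) ?b = vsmult M (ssgn p q) (sact M y (sact M x v))"
    using C v by (simp flip: smult_smult)
  finally show ?thesis .
qed

text \<open>Odd elements with vanishing brackets act as anticommuting operators of square zero, so a
  word in them with a repeated letter acts by zero.\<close>
lemma sact_odd_abelian_anticommute:
  assumes A: "A \<subseteq> Od" "\<forall>x\<in>A. \<forall>y\<in>A. br x y = vzero G" and xy: "x \<in> A" "y \<in> A"
    and v: "v \<in> vcarrier M"
  shows "sact M x (sact M y v) = vsmult M (-1) (sact M y (sact M x v))"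
proof -
  have "x \<in> Od" "y \<in> Od" "x \<in> ssum G Ev Od" "y \<in> ssum G Ev Od"
    using A(1) xy hpart_subset_ssum[of True] by auto
  then show ?thesis using sact_sact_swap[of x True y True v] A(2) xy v by simp
qed

lemma sact_odd_abelian_square:
  assumes A: "A \<subseteq> Od" "\<forall>x\<in>A. \<forall>y\<in>A. br x y = vzero G" and x: "x \<in> A"
    and v: "v \<in> vcarrier M"
  shows "sact M x (sact M x v) = vzero M"
proof -
  have xC: "x \<in> ssum G Ev Od" using x A(1) hpart_subset_ssum[of True] by auto
  let ?a = "sact M x (sact M x v)"
  have aC: "?a \<in> vcarrier M" using xC v by simp
  have "vadd M ?a ?a = vadd M ?a (vsmult M (-1) ?a)"
    using sact_odd_abelian_anticommute[OF A x x v] by simp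
  also have "\<dots> = vzero M" using aC by simp
  finally show ?thesis using double_eq_zero aC by blast
qed

lemma word_act_odd_abelian_not_distinct:
  assumes A: "A \<subseteq> Od" "\<forall>x\<in>A. \<forall>y\<in>A. br x y = vzero G"
    and w: "set w \<subseteq> A" "\<not> distinct w" and v: "v \<in> vcarrier M"
  shows "word_act M w v = vzero M"
proof -
  have AC: "A \<subseteq> ssum G Ev Od" using A(1) hpart_subset_ssum[of True] by auto
  have absorb: "sact M x (word_act M w v) = vzero M" if "x \<in> set w" "set w \<subseteq> A" for x w
    using that
  proof (induction w)
    case Nil
    then show ?case by simp
  next
    case (Cons z w)
    have wC: "word_act M w v \<in> vcarrier M" using Cons.prems(2) AC v by auto
    show ?case
    proof (cases "z = x")
      case True
      then show ?thesis using sact_odd_abelian_square[OF A _ wC] Cons.prems by simp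
    next
      case False
      then have "sact M x (word_act M w v) = vzero M" using Cons by simp
      moreover have "x \<in> A" "z \<in> A" using Cons.prems by auto
      ultimately show ?thesis
        using sact_odd_abelian_anticommute[OF A _ _ wC, of x z] AC by (simp add: subset_iff)
    qed
  qed
  show ?thesis
    using w
  proof (induction w)
    case Nil
    then show ?case by simp
  next
    case (Cons x w)
    show ?case
    proof (cases "distinct w")
      case True
      then show ?thesis using absorb[of x w] Cons.prems by simp
    next
      case False
      then show ?thesis using Cons AC by (simp add: subset_iff)
    qed
  qed
qed

lemma word_act_cspan_letter:
  assumes B: "B \<subseteq> vcarrier G" and y: "y \<in> cspan G B" and Q: "csubspace M Q"
    and w: "set w \<subseteq> vcarrier G" and v: "v \<in> vcarrier M"
    and gens: "\<forall>b\<in>B. word_act M w (sact M b v) \<in> Q"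
  shows "word_act M w (sact M y v) \<in> Q"
proof -
  have wC: "set w \<subseteq> ssum G Ev Od" using w carrier_eq_ssum by simp
  have "(\<lambda>y. word_act M w (sact M y v)) ` cspan G B \<subseteq> Q"
  proof (rule linear_image_cspan[OF G.vspace_axioms vspace_axioms G.csubspace_carrier B _ _ _ Q])
    show "\<forall>x\<in>vcarrier G. word_act M w (sact M x v) \<in> vcarrier M"
      using wC v carrier_eq_ssum by simp
    show "\<forall>x\<in>vcarrier G. \<forall>y\<in>vcarrier G.
        word_act M w (sact M (vadd G x y) v) = vadd M (word_act M w (sact M x v)) (word_act M w (sact M y v))"
      using wC v carrier_eq_ssum by (simp add: sact_add_left word_act_add)
    show "\<forall>a. \<forall>x\<in>vcarrier G. word_act M w (sact M (vsmult G a x) v) = vsmult M a (word_act M w (sact M x v))"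
      using wC v carrier_eq_ssum by (simp add: sact_smult_left word_act_smult)
    show "(\<lambda>y. word_act M w (sact M y v)) ` B \<subseteq> Q" using gens by blast
  qed
  then show ?thesis using y by blast
qed


text \<open>Take a longest word \<open>u\<close> in distinct basis vectors of \<open>A\<close> with \<open>u m \<notin> Q\<close>; then every
  basis vector, hence every element of \<open>A\<close>, maps \<open>u m\<close> into \<open>Q\<close>.\<close>
lemma exists_annihilated_vector:
  assumes A: "A \<subseteq> Od" "\<forall>x\<in>A. \<forall>y\<in>A. br x y = vzero G"
    and B: "finite B" "B \<subseteq> A" "A \<subseteq> cspan G B"
    and Q: "csubspace M Q" and m: "m \<in> vcarrier M" "m \<notin> Q"
  obtains v where "v \<in> vcarrier M" "v \<notin> Q" "\<forall>x\<in>A. sact M x v \<in> Q"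
proof -
  have AC: "A \<subseteq> ssum G Ev Od" using A(1) hpart_subset_ssum[of True] by auto
  have BC: "B \<subseteq> vcarrier G" using B(2) AC carrier_eq_ssum by blast
  define D where "D = {u. set u \<subseteq> B \<and> distinct u \<and> word_act M u m \<notin> Q}"
  have "finite D" unfolding D_def
    by (rule finite_subset[OF _ finite_subset_distinct[OF B(1)]]) blast
  moreover have "[] \<in> D" unfolding D_def using m(2) by simp
  ultimately have "Max (length ` D) \<in> length ` D" by (intro Max_in) auto
  then obtain u where max: "Max (length ` D) = length u" and u: "u \<in> D" by (rule imageE)
  have longest: "length u' \<le> length u" if "u' \<in> D" for u'
    using max that \<open>finite D\<close> by (metis Max_ge finite_imageI imageI)
  have uC: "set u \<subseteq> ssum G Ev Od" using u B(2) AC unfolding D_def by auto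
  let ?v = "word_act M u m"
  have vC: "?v \<in> vcarrier M" using uC m(1) by simp
  have "sact M b ?v \<in> Q" if b: "b \<in> B" for b
  proof (cases "b \<in> set u")
    case True
    then have "word_act M (b # u) m = vzero M"
      using word_act_odd_abelian_not_distinct[OF A, of "b # u"] b B(2) u m(1) unfolding D_def by auto
    then show ?thesis using csubspaceD(2)[OF Q] by simp
  next
    case False
    then have "b # u \<notin> D" using longest[of "b # u"] by auto
    then show ?thesis using False b u unfolding D_def by auto
  qed
  then have "\<forall>x\<in>A. sact M x ?v \<in> Q"
    using word_act_cspan_letter[OF BC _ Q, of _ "[]" ?v] B(3) vC by auto
  then show ?thesis using that vC u unfolding D_def by blast
qed
end

section \<open>Supermodules over a \<int>-graded Lie superalgebra\<close>

locale zgraded_supermodule =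
  fixes G :: "'g cvs" and br :: "'g \<Rightarrow> 'g \<Rightarrow> 'g" and gm g0 gp :: "'g set"
    and M :: "('m, 'g) smod"
  assumes zgraded: "zgraded_lsa G br gm g0 gp"
    and smod_M: "smod G br g0 (ssum G gm gp) M"
begin

lemma lie: "lie_salg G br g0 (ssum G gm gp)"
  using zgraded unfolding zgraded_lsa_def by (elim conjE) assumption

lemma cvs_G: "cvs G"
  using lie unfolding lie_salg_def by (elim conjE) assumption

lemma dsum_G: "dsum G g0 (ssum G gm gp) (vcarrier G)"
  using lie unfolding lie_salg_def by (elim conjE) assumption

lemma dsum_odd: "dsum G gm gp (ssum G gm gp)"
  using zgraded unfolding zgraded_lsa_def by (elim conjE) assumption

lemma csubspace_parts:
  "csubspace G g0" "csubspace G (ssum G gm gp)" "csubspace G gm" "csubspace G gp"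
  using dsum_G dsum_odd unfolding dsum_def by auto

sublocale lie_supermodule G br g0 "ssum G gm gp" M
  by unfold_locales (simp_all add: vspace_def cvs_G smod_M csubspace_parts lie)

lemma gm_subset_odd: "gm \<subseteq> ssum G gm gp" and gp_subset_odd: "gp \<subseteq> ssum G gm gp"
  using G.dsum_summands_subset[OF dsum_odd] by auto

sublocale ge: supermodule G br g0 gp M
  by unfold_locales (simp_all add: csubspace_parts smod_mono[OF subset_refl gp_subset_odd smod_M])

lemma bracket_grading:
  "x \<in> g0 \<Longrightarrow> y \<in> gm \<Longrightarrow> br x y \<in> gm" "x \<in> g0 \<Longrightarrow> y \<in> gp \<Longrightarrow> br x y \<in> gp"
  "x \<in> gm \<Longrightarrow> y \<in> gm \<Longrightarrow> br x y = vzero G" "x \<in> gp \<Longrightarrow> y \<in> gp \<Longrightarrow> br x y = vzero G"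
  using zgraded unfolding zgraded_lsa_def by blast+

lemma bracket_odd_even:
  assumes "y \<in> ssum G gm gp" "z \<in> g0"
  shows "y \<in> gm \<Longrightarrow> br y z \<in> gm" "y \<in> gp \<Longrightarrow> br y z \<in> gp"
proof -
  have "br y z = vsmult G (-1) (br z y)" using bracket_antisym[of y True z False] assms by simp
  then show "y \<in> gm \<Longrightarrow> br y z \<in> gm" "y \<in> gp \<Longrightarrow> br y z \<in> gp"
    using bracket_grading(1,2)[OF assms(2)] csubspace_parts(3,4)[THEN csubspaceD(4)] by auto
qed

lemma bracket_odd_odd: "x \<in> ssum G gm gp \<Longrightarrow> y \<in> ssum G gm gp \<Longrightarrow> br x y \<in> g0"
  using bracket_hpart[of x True y True] by simp

lemma g0_gp_subset_ge: "g0 \<subseteq> ssum G g0 gp" "gp \<subseteq> ssum G g0 gp"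
  using ge.hpart_subset_ssum[of False] ge.hpart_subset_ssum[of True] by auto

text \<open>The heart of the argument: a \<open>g\<^sub>\<ge>\<^sub>0\<close>-stable subspace \<open>Q\<close> absorbs all
  \<open>g\<^sub>-\<^sub>1\<close>-words applied to \<open>s v\<close>, for \<open>s \<in> g\<^sub>0 \<union> g\<^sub>1\<close>, as soon as it absorbs all
  \<open>g\<^sub>-\<^sub>1\<close>-words applied to \<open>v\<close>: commuting the last letter \<open>y\<close> past \<open>s\<close> produces
  \<open>[y, s] \<in> g\<^sub>-\<^sub>1 \<union> g\<^sub>0\<close>, handled by the hypothesis on \<open>v\<close> or by induction.\<close>
lemma word_act_gm_sact_ge:
  assumes Q: "sub_smod G g0 gp M Q" and v: "v \<in> word_core M gm Q" and s: "s \<in> g0 \<union> gp"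
    and w: "set w \<subseteq> gm"
  shows "word_act M w (sact M s v) \<in> Q"
  using w s v
proof (induction w arbitrary: s v rule: rev_induct)
  case Nil
  have "v \<in> Q" using word_core_subset Nil.prems(3) by blast
  then show ?case using Q Nil.prems(2) g0_gp_subset_ge unfolding sub_smod_iff by auto
next
  case (snoc y w)
  have Qs: "csubspace M Q" using Q unfolding sub_smod_iff by blast
  have y: "y \<in> gm" "y \<in> ssum G gm gp" using snoc.prems(1) gm_subset_odd by auto
  have vC: "v \<in> vcarrier M" using snoc.prems(3) unfolding word_core_def by blast
  have wC: "set w \<subseteq> ssum G g0 (ssum G gm gp)"
    using snoc.prems(1) gm_subset_odd hpart_subset_ssum[of True] by auto
  obtain p where sp: "s \<in> hpart g0 (ssum G gm gp) p" and p: "p \<longleftrightarrow> s \<in> gp"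
    using snoc.prems(2) gp_subset_odd by (cases "s \<in> gp") (auto intro: that[of True] that[of False])
  have sC: "s \<in> ssum G g0 (ssum G gm gp)" using sp hpart_subset_ssum by blast
  have swap: "sact M y (sact M s v) =
      vadd M (sact M (br y s) v) (vsmult M (ssgn True p) (sact M s (sact M y v)))"
    using sact_sact_swap[of y True s p v] y sp vC by simp
  have yv: "sact M y v \<in> word_core M gm Q"
    using sact_word_core[OF y(1) _ snoc.prems(3)] gm_subset_odd hpart_subset_ssum[of True] by auto
  have first: "word_act M w (sact M (br y s) v) \<in> Q"
  proof (cases "s \<in> gp")
    case True
    then have "br y s \<in> g0" using bracket_odd_odd y(2) gp_subset_odd by blast
    then show ?thesis using snoc.IH snoc.prems(1,3) by simp
  next
    case False
    then have "br y s \<in> gm" using snoc.prems(2) bracket_odd_even(1)[OF y(2)] y(1) by blast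
    then have "set (w @ [br y s]) \<subseteq> gm" using snoc.prems(1) by simp
    then have "word_act M (w @ [br y s]) v \<in> Q" using snoc.prems(3) unfolding word_core_def by blast
    then show ?thesis by simp
  qed
  have second: "word_act M w (sact M s (sact M y v)) \<in> Q"
    using snoc.IH[OF _ snoc.prems(2) yv] snoc.prems(1) by simp
  have "word_act M (w @ [y]) (sact M s v) =
      vadd M (word_act M w (sact M (br y s) v)) (vsmult M (ssgn True p) (word_act M w (sact M s (sact M y v))))"
  proof -
    have "br y s \<in> hpart g0 (ssum G gm gp) (True \<noteq> p)" using bracket_hpart[OF _ sp, of y True] y by simp
    then have "br y s \<in> ssum G g0 (ssum G gm gp)" using hpart_subset_ssum by blast
    then have "sact M (br y s) v \<in> vcarrier M" using vC by simp
    moreover have "y \<in> ssum G g0 (ssum G gm gp)" using y(2) hpart_subset_ssum[of True] by auto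
    ultimately show ?thesis using swap wC vC sC by (simp add: word_act_add word_act_smult)
  qed
  then show ?case using first second csubspaceD(3,4)[OF Qs] by simp
qed

lemma sub_smod_word_core_gm:
  assumes Q: "sub_smod G g0 gp M Q"
  shows "sub_smod G g0 (ssum G gm gp) M (word_core M gm Q)"
proof -
  have gm_alg: "gm \<subseteq> ssum G g0 (ssum G gm gp)" using gm_subset_odd hpart_subset_ssum[of True] by auto
  have cs: "csubspace M (word_core M gm Q)"
    using csubspace_word_core[OF gm_alg] Q unfolding sub_smod_iff by blast
  have "graded_subset M (word_core M gm Q)"
    using graded_word_core[of gm Q] gm_subset_odd Q unfolding sub_smod_iff by blast
  moreover have "sact M x u \<in> word_core M gm Q"
    if x: "x \<in> ssum G g0 (ssum G gm gp)" and u: "u \<in> word_core M gm Q" for x u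
  proof -
    obtain e y z where eyz: "e \<in> g0" "y \<in> gm" "z \<in> gp" "x = vadd G e (vadd G y z)"
      using x unfolding ssum_def by blast
    have C: "e \<in> vcarrier G" "y \<in> vcarrier G" "z \<in> vcarrier G"
      using eyz csubspace_parts by (auto dest: csubspaceD(1))
    have uC: "u \<in> vcarrier M" using u unfolding word_core_def by blast
    have ge: "sact M s u \<in> word_core M gm Q" if "s \<in> g0 \<union> gp" for s
    proof -
      have "s \<in> ssum G g0 (ssum G gm gp)"
        using that gp_subset_odd hpart_subset_ssum[of False] hpart_subset_ssum[of True] by auto
      then show ?thesis
        using word_act_gm_sact_ge[OF Q u that] uC unfolding word_core_def by simp
    qed
    have "sact M x u = vadd M (sact M e u) (vadd M (sact M y u) (sact M z u))"
      using eyz(4) C uC by (simp add: sact_add_left)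
    moreover have "sact M y u \<in> word_core M gm Q" using sact_word_core[OF eyz(2) gm_alg u] .
    ultimately show ?thesis using ge eyz(1,3) csubspaceD(3)[OF cs] by simp
  qed
  ultimately show ?thesis using cs unfolding sub_smod_iff by blast
qed

text \<open>Any \<open>g\<^sub>-\<^sub>1\<close>-word applied to \<open>m\<close> reduces to words in distinct basis vectors by
  linearity and anticommutation, so \<open>m\<close> lies in the \<open>g\<close>-submodule \<open>word_core M gm Q\<close>.\<close>
lemma simple_generated_by_gm_words:
  assumes simple: "simple_smod G br g0 (ssum G gm gp) M" and B: "B \<subseteq> gm" "gm \<subseteq> cspan G B"
    and m: "m \<in> vcarrier M" "m \<noteq> vzero M"
    and Q: "sub_smod G g0 gp M Q" "{word_act M u m | u. set u \<subseteq> B \<and> distinct u} \<subseteq> Q"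
  shows "Q = vcarrier M"
proof -
  have Qs: "csubspace M Q" using Q(1) unfolding sub_smod_iff by blast
  have gmC: "gm \<subseteq> vcarrier G" using csubspaceD(1)[OF csubspace_parts(3)] .
  have gm_alg: "gm \<subseteq> ssum G g0 (ssum G gm gp)" using gm_subset_odd hpart_subset_ssum[of True] by auto
  have abelian: "\<forall>x\<in>gm. \<forall>y\<in>gm. br x y = vzero G" using bracket_grading(3) by blast
  have words: "word_act M (w @ u) m \<in> Q" if "set w \<subseteq> gm" "set u \<subseteq> B" "distinct u" for w u
    using that
  proof (induction w arbitrary: u rule: rev_induct)
    case Nil
    then show ?case using Q(2) by auto
  next
    case (snoc y w)
    have uC: "set u \<subseteq> ssum G g0 (ssum G gm gp)" using snoc.prems(2) B(1) gm_alg by auto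
    have "word_act M w (sact M b (word_act M u m)) \<in> Q" if b: "b \<in> B" for b
    proof (cases "b \<in> set u")
      case True
      then have "word_act M (b # u) m = vzero M"
        using word_act_odd_abelian_not_distinct[OF gm_subset_odd abelian, of "b # u"] b B(1) snoc.prems(2) m(1)
        by auto
      then show ?thesis using snoc.prems(1) gm_alg csubspaceD(2)[OF Qs] by (simp add: subset_iff)
    next
      case False
      then have "word_act M (w @ (b # u)) m \<in> Q" using snoc.IH[of "b # u"] snoc.prems b by simp
      then show ?thesis by simp
    qed
    then have "word_act M w (sact M y (word_act M u m)) \<in> Q"
      using word_act_cspan_letter[OF _ _ Qs, of B y w "word_act M u m"] B gmC snoc.prems(1) uC m(1)
        carrier_eq_ssum by auto
    then show ?case by simp
  qed
  have "m \<in> word_core M gm Q" using words[of _ "[]"] m(1) unfolding word_core_def by simp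
  moreover have "sub_smod G g0 (ssum G gm gp) M (word_core M gm Q)" using sub_smod_word_core_gm[OF Q(1)] .
  ultimately have "word_core M gm Q = vcarrier M" using simple m(2) unfolding simple_smod_def by blast
  then show ?thesis using word_core_subset Qs[THEN csubspaceD(1)] by blast
qed

lemma exists_maximal_sub_smod_ge:
  assumes simple: "simple_smod G br g0 (ssum G gm gp) M" and fd: "fin_dim G (ssum G gm gp)"
  obtains K where "maximal_sub_smod G g0 gp M K"
proof -
  obtain B where B: "finite B" "B \<subseteq> gm" "gm \<subseteq> cspan G B"
    using G.fin_dim_dsum(1)[OF dsum_odd fd] by blast
  obtain m where m: "m \<in> vcarrier M" "m \<noteq> vzero M"
    using simple zero_closed unfolding simple_smod_def by blast
  define S where "S = {word_act M u m | u. set u \<subseteq> B \<and> distinct u}"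
  have "finite S"
    unfolding S_def using finite_subset_distinct[OF B(1)]
    by (simp add: setcompr_eq_image finite_image_set)
  have "m \<in> S" unfolding S_def by (intro CollectI exI[of _ "[]"]) simp
  have SC: "S \<subseteq> vcarrier M"
    using B(2) gm_subset_odd hpart_subset_ssum[of True] m(1) unfolding S_def by auto
  obtain K where K: "sub_smod G g0 gp M K" "\<not> S \<subseteq> K"
    and max: "\<And>X. sub_smod G g0 gp M X \<Longrightarrow> K \<subseteq> X \<Longrightarrow> \<not> S \<subseteq> X \<Longrightarrow> X = K"
    using ge.exists_maximal_sub_smod_avoiding[OF \<open>finite S\<close>] \<open>m \<in> S\<close> m(2) by blast
  have "X = K \<or> X = vcarrier M" if "sub_smod G g0 gp M X" "K \<subseteq> X" for X
    using max[OF that] simple_generated_by_gm_words[OF simple B(2,3) m that(1)] unfolding S_def by blast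
  moreover have "K \<noteq> vcarrier M" using K(2) SC by blast
  ultimately show ?thesis using that K(1) unfolding maximal_sub_smod_def by blast
qed

lemma gp_preimage_sact_stable:
  assumes K: "sub_smod G g0 gp M K" and s: "s \<in> ssum G g0 gp"
    and u: "u \<in> vcarrier M" "\<forall>y\<in>gp. sact M y u \<in> K" and y: "y \<in> gp"
  shows "sact M y (sact M s u) \<in> K"
proof -
  have Ks: "csubspace M K" "\<And>y k. y \<in> ssum G g0 gp \<Longrightarrow> k \<in> K \<Longrightarrow> sact M y k \<in> K"
    using K unfolding sub_smod_iff by auto
  have KC: "K \<subseteq> vcarrier M" using csubspaceD(1)[OF Ks(1)] .
  obtain z x where zx: "z \<in> g0" "x \<in> gp" "s = vadd G z x" using s unfolding ssum_def by blast
  have odd: "y \<in> ssum G gm gp" "x \<in> ssum G gm gp" using y zx(2) gp_subset_odd by auto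
  have alg: "y \<in> ssum G g0 (ssum G gm gp)" "x \<in> ssum G g0 (ssum G gm gp)" "z \<in> ssum G g0 (ssum G gm gp)"
    using odd zx(1) hpart_subset_ssum[of True] hpart_subset_ssum[of False] by auto
  then have zxC: "z \<in> vcarrier G" "x \<in> vcarrier G" using carrier_eq_ssum by auto
  have "sact M y (sact M z u) = vadd M (sact M (br y z) u) (sact M z (sact M y u))"
    using sact_sact_swap[of y True z False u] odd zx(1) u(1) alg by simp
  moreover have "sact M (br y z) u \<in> K" using u(2) bracket_odd_even(2)[OF odd(1) zx(1) y] by blast
  moreover have "sact M z (sact M y u) \<in> K" using u(2) y Ks(2) zx(1) g0_gp_subset_ge by blast
  ultimately have "sact M y (sact M z u) \<in> K" using csubspaceD(3)[OF Ks(1)] by simp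
  moreover have "sact M y (sact M x u) = vadd M (sact M (br y x) u) (vsmult M (-1) (sact M x (sact M y u)))"
    using sact_sact_swap[of y True x True u] odd u(1) by simp
  moreover have "sact M (br y x) u = vzero M" using bracket_grading(4)[OF y zx(2)] u(1) by simp
  moreover have "sact M x (sact M y u) \<in> K" using u(2) y Ks(2) zx(2) g0_gp_subset_ge by blast
  ultimately have "sact M y (sact M z u) \<in> K" "sact M y (sact M x u) \<in> K"
    using csubspaceD(3,4)[OF Ks(1)] KC by (simp_all add: subset_iff)
  moreover have "sact M y (sact M s u) = vadd M (sact M y (sact M z u)) (sact M y (sact M x u))"
    using zx(3) zxC u(1) alg by (simp add: sact_add_left sact_add_right)
  ultimately show ?thesis using csubspaceD(3)[OF Ks(1)] by simp
qed

lemma sub_smod_gp_preimage: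
  assumes K: "sub_smod G g0 gp M K"
  shows "sub_smod G g0 gp M {u \<in> vcarrier M. \<forall>y\<in>gp. sact M y u \<in> K}" (is "sub_smod _ _ _ _ ?L")
proof -
  have Ks: "csubspace M K" "graded_subset M K" using K unfolding sub_smod_iff by auto
  have gp_alg: "\<And>y. y \<in> gp \<Longrightarrow> y \<in> ssum G g0 (ssum G gm gp)"
    using gp_subset_odd hpart_subset_ssum[of True] by auto
  have "csubspace M ?L"
    unfolding csubspace_def
  proof (intro conjI ballI allI)
    show "?L \<subseteq> vcarrier M" by blast
    show "vzero M \<in> ?L" using gp_alg csubspaceD(2)[OF Ks(1)] by simp
    show "vadd M u w \<in> ?L" if "u \<in> ?L" "w \<in> ?L" for u w
      using that gp_alg csubspaceD(3)[OF Ks(1)] by (simp add: sact_add_right)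
    show "vsmult M a u \<in> ?L" if "u \<in> ?L" for a u
      using that gp_alg csubspaceD(4)[OF Ks(1)] by (simp add: sact_smult_right)
  qed
  moreover have "graded_subset M ?L"
    unfolding graded_subset_def
  proof (intro ballI allI impI)
    fix u a b assume u: "u \<in> ?L" and ab: "a \<in> spar0 M" "b \<in> spar1 M" "u = vadd M a b"
    have C: "a \<in> vcarrier M" "b \<in> vcarrier M" using ab csubspace_spar[THEN csubspaceD(1)] by auto
    have "sact M y a \<in> K \<and> sact M y b \<in> K" if y: "y \<in> gp" for y
    proof -
      have yh: "y \<in> hpart g0 (ssum G gm gp) True" using y gp_subset_odd by auto
      have ya: "sact M y a \<in> hpart (spar0 M) (spar1 M) True"
        using sact_hpart[OF yh, of a False] ab(1) by simp
      have yb: "sact M y b \<in> hpart (spar0 M) (spar1 M) (\<not> True)"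
        using sact_hpart[OF yh, of b True] ab(2) by simp
      have "vadd M (sact M y a) (sact M y b) \<in> K"
        using u y ab(3) C gp_alg by (simp add: sact_add_right)
      then show ?thesis using graded_split[OF Ks(2) ya yb] by blast
    qed
    then show "a \<in> ?L \<and> b \<in> ?L" using C by blast
  qed
  moreover have "\<forall>s\<in>ssum G g0 gp. \<forall>u\<in>?L. sact M s u \<in> ?L"
    using gp_preimage_sact_stable[OF K] ge.sact_closed by blast
  ultimately show ?thesis unfolding sub_smod_iff by blast
qed

text \<open>The vectors mapped into \<open>K\<close> by \<open>g\<^sub>1\<close> form a \<open>g\<^sub>\<ge>\<^sub>0\<close>-submodule containing \<open>K\<close> and,
  since \<open>g\<^sub>1\<close> acts nilpotently, some vector outside \<open>K\<close>.\<close>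
lemma gp_into_maximal:
  assumes fd: "fin_dim G (ssum G gm gp)" and maxK: "maximal_sub_smod G g0 gp M K"
    and x: "x \<in> gp" and v: "v \<in> vcarrier M"
  shows "sact M x v \<in> K"
proof -
  let ?L = "{u \<in> vcarrier M. \<forall>y\<in>gp. sact M y u \<in> K}"
  have K: "sub_smod G g0 gp M K" "K \<noteq> vcarrier M"
    and max: "\<And>X. sub_smod G g0 gp M X \<Longrightarrow> K \<subseteq> X \<Longrightarrow> X = K \<or> X = vcarrier M"
    using maxK unfolding maximal_sub_smod_def by auto
  have Ks: "csubspace M K" using K(1) unfolding sub_smod_iff by blast
  have KC: "K \<subseteq> vcarrier M" using csubspaceD(1)[OF Ks] .
  have "K \<subseteq> ?L" using KC K(1) g0_gp_subset_ge unfolding sub_smod_iff by blast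
  obtain B where B: "finite B" "B \<subseteq> gp" "gp \<subseteq> cspan G B"
    using G.fin_dim_dsum(2)[OF dsum_odd fd] by blast
  obtain m where "m \<in> vcarrier M" "m \<notin> K" using K(2) KC by blast
  then obtain v0 where "v0 \<in> vcarrier M" "v0 \<notin> K" "\<forall>y\<in>gp. sact M y v0 \<in> K"
    using exists_annihilated_vector[OF gp_subset_odd _ B Ks] bracket_grading(4) by blast
  then have "?L \<noteq> K" by blast
  then have "?L = vcarrier M" using max[OF sub_smod_gp_preimage[OF K(1)] \<open>K \<subseteq> ?L\<close>] by blast
  then show ?thesis using x v by blast
qed

end

section \<open>Frobenius reciprocity\<close>

lemma coind_simps:
  "vcarrier (coind G br gm g0 gp N) =
     {f \<in> hom_Ug G br g0 (ssum G gm gp) N.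
        (\<forall>x\<in>g0. \<forall>u. f (x # u) = sact N x (f u)) \<and> (\<forall>x\<in>gp. \<forall>u. f (x # u) = vzero N)}"
  "vadd (coind G br gm g0 gp N) = (\<lambda>f g w. vadd N (f w) (g w))"
  "vsmult (coind G br gm g0 gp N) = (\<lambda>a f w. vsmult N a (f w))"
  "spar0 (coind G br gm g0 gp N) = {f \<in> vcarrier (coind G br gm g0 gp N).
     \<forall>w p. hword g0 (ssum G gm gp) w p \<longrightarrow> f w \<in> hpart (spar0 N) (spar1 N) p}"
  "spar1 (coind G br gm g0 gp N) = {f \<in> vcarrier (coind G br gm g0 gp N).
     \<forall>w p. hword g0 (ssum G gm gp) w p \<longrightarrow> f w \<in> hpart (spar0 N) (spar1 N) (\<not> p)}"
  "sact (coind G br gm g0 gp N) = (\<lambda>x f w. f (w @ [x]))"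
  unfolding coind_def Let_def by simp_all

text \<open>Frobenius reciprocity, in the direction needed: a \<open>g\<^sub>0\<close>-homomorphism \<open>\<pi> : M \<rightarrow> N\<close>
  that kills \<open>g\<^sub>1 M\<close> induces the \<open>g\<close>-homomorphism \<open>v \<mapsto> (u \<mapsto> \<pi> (u v))\<close> into
  the coinduced module.\<close>
locale frobenius = zgraded_supermodule +
  fixes N :: "('n, 'g) smod" and \<pi> :: "'m \<Rightarrow> 'n"
  assumes smod_N: "smod G br g0 {vzero G} N"
    and hom: "smod_hom G g0 {vzero G} M N \<pi>"
    and kills_gp: "\<And>x v. x \<in> gp \<Longrightarrow> v \<in> vcarrier M \<Longrightarrow> \<pi> (sact M x v) = vzero N"
begin

sublocale N: supermodule G br g0 "{vzero G}" N
proof unfold_locales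
  show "csubspace G {vzero G}" unfolding csubspace_def by simp
qed (simp_all add: smod_N csubspace_parts)

lemma g0_subset_ssum_zero: "g0 \<subseteq> ssum G g0 {vzero G}"
  using N.hpart_subset_ssum[of False] by simp

lemma hom_unfolded:
  "\<forall>v\<in>vcarrier M. \<pi> v \<in> vcarrier N"
  "\<forall>u\<in>vcarrier M. \<forall>v\<in>vcarrier M. \<pi> (vadd M u v) = vadd N (\<pi> u) (\<pi> v)"
  "\<forall>a. \<forall>v\<in>vcarrier M. \<pi> (vsmult M a v) = vsmult N a (\<pi> v)"
  "\<pi> ` spar0 M \<subseteq> spar0 N" "\<pi> ` spar1 M \<subseteq> spar1 N"
  "\<forall>x\<in>ssum G g0 {vzero G}. \<forall>v\<in>vcarrier M. \<pi> (sact M x v) = sact N x (\<pi> v)"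
  using hom unfolding smod_hom_def by auto

lemma \<pi>_closed: "v \<in> vcarrier M \<Longrightarrow> \<pi> v \<in> vcarrier N"
  using hom_unfolded(1) by blast

lemma \<pi>_add: "u \<in> vcarrier M \<Longrightarrow> v \<in> vcarrier M \<Longrightarrow> \<pi> (vadd M u v) = vadd N (\<pi> u) (\<pi> v)"
  using hom_unfolded(2) by blast

lemma \<pi>_smult: "v \<in> vcarrier M \<Longrightarrow> \<pi> (vsmult M a v) = vsmult N a (\<pi> v)"
  using hom_unfolded(3) by blast

lemma \<pi>_hpart: "v \<in> hpart (spar0 M) (spar1 M) p \<Longrightarrow> \<pi> v \<in> hpart (spar0 N) (spar1 N) p"
  using hom_unfolded(4,5) by (cases p) auto

lemma \<pi>_sact: "x \<in> g0 \<Longrightarrow> v \<in> vcarrier M \<Longrightarrow> \<pi> (sact M x v) = sact N x (\<pi> v)"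
  using hom_unfolded(6) g0_subset_ssum_zero by blast

definition frobenius_map :: "'m \<Rightarrow> 'g list \<Rightarrow> 'n" where
  "frobenius_map v = (\<lambda>w. if set w \<subseteq> vcarrier G then \<pi> (word_act M w v) else vzero N)"

lemma frobenius_map_Cons:
  "x \<in> vcarrier G \<Longrightarrow> frobenius_map v (x # u) =
     (if set u \<subseteq> vcarrier G then \<pi> (sact M x (word_act M u v)) else vzero N)"
  by (simp add: frobenius_map_def)

lemma \<pi>_word_act_lincomb:
  assumes "set u \<subseteq> vcarrier G" "X \<in> vcarrier M" "Y \<in> vcarrier M"
  shows "\<pi> (word_act M u (vadd M (vsmult M a X) (vsmult M b Y))) =
    vadd N (vsmult N a (\<pi> (word_act M u X))) (vsmult N b (\<pi> (word_act M u Y)))"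
proof -
  have u: "set u \<subseteq> ssum G g0 (ssum G gm gp)" using assms(1) carrier_eq_ssum by simp
  then show ?thesis
    using assms(2,3) by (simp add: word_act_add word_act_smult \<pi>_add \<pi>_smult)
qed

lemma frobenius_map_letter_linear:
  assumes v: "v \<in> vcarrier M" and x: "x \<in> vcarrier G" and y: "y \<in> vcarrier G"
  shows "frobenius_map v (u @ [vadd G (vsmult G a x) (vsmult G b y)] @ w) =
    vadd N (vsmult N a (frobenius_map v (u @ [x] @ w))) (vsmult N b (frobenius_map v (u @ [y] @ w)))"
proof (cases "set u \<subseteq> vcarrier G \<and> set w \<subseteq> vcarrier G")
  case True
  define t where "t = word_act M w v"
  have t: "t \<in> vcarrier M" unfolding t_def using True v word_act_in_carrier by blast
  have xy: "x \<in> ssum G g0 (ssum G gm gp)" "y \<in> ssum G g0 (ssum G gm gp)"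
    using x y carrier_eq_ssum by auto
  have "word_act M (u @ [vadd G (vsmult G a x) (vsmult G b y)] @ w) v = word_act M u (vadd M (vsmult M a (sact M x t)) (vsmult M b (sact M y t)))"
    using sact_lincomb_left[OF xy t] by (simp add: t_def)
  then show ?thesis
    unfolding frobenius_map_def using True x y xy t \<pi>_word_act_lincomb by (simp add: t_def)
next
  case False
  then show ?thesis unfolding frobenius_map_def using x y by auto
qed

lemma frobenius_map_commutation:
  assumes v: "v \<in> vcarrier M" and x: "x \<in> hpart g0 (ssum G gm gp) p" and y: "y \<in> hpart g0 (ssum G gm gp) q"
  shows "frobenius_map v (u @ [x, y] @ w) =
    vadd N (vsmult N (ssgn p q) (frobenius_map v (u @ [y, x] @ w))) (frobenius_map v (u @ [br x y] @ w))"
proof -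
  have xy: "x \<in> ssum G g0 (ssum G gm gp)" "y \<in> ssum G g0 (ssum G gm gp)"
    "br x y \<in> ssum G g0 (ssum G gm gp)"
    using x y bracket_hpart[OF x y] hpart_subset_ssum by auto
  then have xyC: "x \<in> vcarrier G" "y \<in> vcarrier G" "br x y \<in> vcarrier G"
    using carrier_eq_ssum by auto
  show ?thesis
  proof (cases "set u \<subseteq> vcarrier G \<and> set w \<subseteq> vcarrier G")
    case True
    define t where "t = word_act M w v"
    have t: "t \<in> vcarrier M" unfolding t_def using True v word_act_in_carrier by blast
    have "word_act M (u @ [x, y] @ w) v =
        word_act M u (vadd M (vsmult M 1 (sact M (br x y) t)) (vsmult M (ssgn p q) (sact M y (sact M x t))))"
      using sact_sact_swap[OF x y t] xy t by (simp add: t_def)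
    then have "frobenius_map v (u @ [x, y] @ w) =
        vadd N (\<pi> (word_act M u (sact M (br x y) t))) (vsmult N (ssgn p q) (\<pi> (word_act M u (sact M y (sact M x t)))))"
      unfolding frobenius_map_def
      using True xyC xy t word_act_in_carrier \<pi>_closed
        \<pi>_word_act_lincomb[of u "sact M (br x y) t" "sact M y (sact M x t)" 1 "ssgn p q"]
      by simp
    also have "\<dots> = vadd N (vsmult N (ssgn p q) (\<pi> (word_act M u (sact M y (sact M x t))))) (\<pi> (word_act M u (sact M (br x y) t)))"
      using True xy t word_act_in_carrier \<pi>_closed by (intro N.add_commute) simp_all
    finally show ?thesis unfolding frobenius_map_def using True xyC by (simp add: t_def)
  next
    case False
    then show ?thesis unfolding frobenius_map_def using xyC by auto
  qed
qed

lemma frobenius_map_hom_Ug: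
  assumes v: "v \<in> vcarrier M"
  shows "frobenius_map v \<in> hom_Ug G br g0 (ssum G gm gp) N"
  unfolding hom_Ug_def
proof (intro CollectI conjI allI ballI impI frobenius_map_letter_linear[OF v]
    frobenius_map_commutation[OF v])
  fix w show "frobenius_map v w \<in> vcarrier N"
    unfolding frobenius_map_def using v word_act_in_carrier \<pi>_closed by simp
next
  fix w assume "\<not> set w \<subseteq> vcarrier G"
  then show "frobenius_map v w = vzero N" unfolding frobenius_map_def by simp
qed

lemma frobenius_map_in_coind:
  assumes v: "v \<in> vcarrier M"
  shows "frobenius_map v \<in> vcarrier (coind G br gm g0 gp N)"
  unfolding coind_simps
proof (intro CollectI conjI ballI allI frobenius_map_hom_Ug[OF v])
  fix x u assume x: "x \<in> g0"
  have xC: "x \<in> vcarrier G" using x csubspace_parts(1) by (auto dest: csubspaceD(1))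
  show "frobenius_map v (x # u) = sact N x (frobenius_map v u)"
    using x xC v word_act_in_carrier \<pi>_sact g0_subset_ssum_zero
    by (auto simp: frobenius_map_Cons frobenius_map_def)
next
  fix x u assume x: "x \<in> gp"
  have xC: "x \<in> vcarrier G" using x csubspace_parts(4) by (auto dest: csubspaceD(1))
  show "frobenius_map v (x # u) = vzero N"
    using x xC v word_act_in_carrier kills_gp by (simp add: frobenius_map_Cons)
qed

lemma frobenius_map_smod_hom: "smod_hom G g0 (ssum G gm gp) M (coind G br gm g0 gp N) frobenius_map"
  unfolding smod_hom_def
proof (intro conjI ballI allI subsetI)
  fix v assume "v \<in> vcarrier M"
  then show "frobenius_map v \<in> vcarrier (coind G br gm g0 gp N)" by (rule frobenius_map_in_coind)
next
  fix u v assume u: "u \<in> vcarrier M" and v: "v \<in> vcarrier M"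
  show "frobenius_map (vadd M u v) = vadd (coind G br gm g0 gp N) (frobenius_map u) (frobenius_map v)"
    unfolding coind_simps frobenius_map_def
    using u v word_act_in_carrier by (auto simp: word_act_add carrier_eq_ssum \<pi>_add)
next
  fix a v assume v: "v \<in> vcarrier M"
  show "frobenius_map (vsmult M a v) = vsmult (coind G br gm g0 gp N) a (frobenius_map v)"
    unfolding coind_simps frobenius_map_def
    using v word_act_in_carrier by (auto simp: word_act_smult carrier_eq_ssum \<pi>_smult)
next
  fix x v assume x: "x \<in> ssum G g0 (ssum G gm gp)" and v: "v \<in> vcarrier M"
  show "frobenius_map (sact M x v) = sact (coind G br gm g0 gp N) x (frobenius_map v)"
    unfolding coind_simps frobenius_map_def using x carrier_eq_ssum by auto
next
  have parity: "frobenius_map v \<in> {f \<in> vcarrier (coind G br gm g0 gp N).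
      \<forall>w p. hword g0 (ssum G gm gp) w p \<longrightarrow> f w \<in> hpart (spar0 N) (spar1 N) (p \<noteq> r)}"
    if v: "v \<in> hpart (spar0 M) (spar1 M) r" for v r
  proof (intro CollectI conjI allI impI)
    show "frobenius_map v \<in> vcarrier (coind G br gm g0 gp N)"
      using v hpart_subset_carrier frobenius_map_in_coind by blast
    fix w p assume w: "hword g0 (ssum G gm gp) w p"
    have "set w \<subseteq> vcarrier G" using word_act_hpart(1)[OF w v] carrier_eq_ssum by simp
    moreover have "(r \<noteq> p) = (p \<noteq> r)" by blast
    then have "word_act M w v \<in> hpart (spar0 M) (spar1 M) (p \<noteq> r)"
      using word_act_hpart(2)[OF w v] by simp
    ultimately show "frobenius_map v w \<in> hpart (spar0 N) (spar1 N) (p \<noteq> r)"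
      unfolding frobenius_map_def using \<pi>_hpart by simp
  qed
  fix f
  show "f \<in> frobenius_map ` spar0 M \<Longrightarrow> f \<in> spar0 (coind G br gm g0 gp N)"
    using parity[of _ False] unfolding coind_simps by auto
  show "f \<in> frobenius_map ` spar1 M \<Longrightarrow> f \<in> spar1 (coind G br gm g0 gp N)"
    using parity[of _ True] unfolding coind_simps by auto
qed

lemma \<pi>_zero: "\<pi> (vzero M) = vzero N"
  using \<pi>_smult[of "vzero M" 0] \<pi>_closed[of "vzero M"] by simp

lemma sub_smod_kernel_core:
  "sub_smod G g0 (ssum G gm gp) M (word_core M (g0 \<union> ssum G gm gp) {v \<in> vcarrier M. \<pi> v = vzero N})"
    (is "sub_smod _ _ _ _ (word_core _ ?A ?ker)")
proof -
  have A: "?A \<subseteq> ssum G g0 (ssum G gm gp)"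
    using hpart_subset_ssum[of False] hpart_subset_ssum[of True] by auto
  have "csubspace M ?ker"
    unfolding csubspace_def by (simp add: \<pi>_zero \<pi>_add \<pi>_smult)
  then have cs: "csubspace M (word_core M ?A ?ker)" by (rule csubspace_word_core[OF A])
  have "graded_subset M ?ker"
    unfolding graded_subset_def
  proof (intro ballI allI impI)
    fix u a b assume u: "u \<in> ?ker" and ab: "a \<in> spar0 M" "b \<in> spar1 M" "u = vadd M a b"
    have C: "a \<in> vcarrier M" "b \<in> vcarrier M" using ab csubspace_spar[THEN csubspaceD(1)] by auto
    have \<pi>ab: "\<pi> a \<in> spar0 N" "\<pi> b \<in> spar1 N" using \<pi>_hpart[of a False] \<pi>_hpart[of b True] ab by auto
    have z: "vzero N \<in> spar0 N" "vzero N \<in> spar1 N" using N.csubspace_spar[THEN csubspaceD(2)] by auto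
    have "vadd N (\<pi> a) (\<pi> b) = vadd N (vzero N) (vzero N)" using u ab C by (simp add: \<pi>_add)
    then have "\<pi> a = vzero N" "\<pi> b = vzero N"
      using dsum_unique[OF N.dsum_parity \<pi>ab(1) z(1) \<pi>ab(2) z(2)] by simp_all
    then show "a \<in> ?ker \<and> b \<in> ?ker" using C by simp
  qed
  then have "graded_subset M (word_core M ?A ?ker)" by (rule graded_word_core[rotated]) simp
  moreover have "sact M x u \<in> word_core M ?A ?ker"
    if x: "x \<in> ssum G g0 (ssum G gm gp)" and u: "u \<in> word_core M ?A ?ker" for x u
  proof -
    obtain e d where ed: "e \<in> g0" "d \<in> ssum G gm gp" "x = vadd G e d" using x unfolding ssum_def by blast
    have edA: "e \<in> ?A" "d \<in> ?A" using ed by auto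
    have uC: "u \<in> vcarrier M" using u unfolding word_core_def by blast
    have "sact M x u = vadd M (sact M e u) (sact M d u)"
      using ed edA A uC by (simp add: sact_add_left carrier_eq_ssum subset_iff)
    then show ?thesis using sact_word_core[OF _ A u] edA csubspaceD(3)[OF cs] by simp
  qed
  ultimately show ?thesis using cs unfolding sub_smod_iff by blast
qed

lemma frobenius_map_inj:
  assumes simple: "simple_smod G br g0 (ssum G gm gp) M" and nonzero: "\<exists>v\<in>vcarrier M. \<pi> v \<noteq> vzero N"
  shows "inj_on frobenius_map (vcarrier M)"
proof (rule inj_onI)
  let ?A = "g0 \<union> ssum G gm gp" and ?ker = "{v \<in> vcarrier M. \<pi> v = vzero N}"
  have "word_core M ?A ?ker \<noteq> vcarrier M" using word_core_subset nonzero by blast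
  then have core: "word_core M ?A ?ker = {vzero M}"
    using simple sub_smod_kernel_core unfolding simple_smod_def by blast
  fix u v assume u: "u \<in> vcarrier M" and v: "v \<in> vcarrier M" and eq: "frobenius_map u = frobenius_map v"
  let ?d = "vadd M u (vsmult M (-1) v)"
  have "word_act M w ?d \<in> ?ker" if w: "set w \<subseteq> ?A" for w
  proof -
    have wC: "set w \<subseteq> ssum G g0 (ssum G gm gp)"
      using w hpart_subset_ssum[of False] hpart_subset_ssum[of True] by auto
    then have "\<pi> (word_act M w u) = \<pi> (word_act M w v)"
      using fun_cong[OF eq, of w] carrier_eq_ssum unfolding frobenius_map_def by simp
    then show ?thesis
      using u v wC \<pi>_closed by (simp add: word_act_add word_act_smult \<pi>_add \<pi>_smult)
  qed
  then have "?d \<in> word_core M ?A ?ker" using u v unfolding word_core_def by simp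
  then show "u = v" using core sub_eq_zero u v by simp
qed

end

lemma (in zgraded_supermodule) quotient_by_maximal:
  assumes fd: "fin_dim G (ssum G gm gp)" and maxK: "maximal_sub_smod G g0 gp M K"
  shows "simple_smod G br g0 {vzero G} (quot_smod M K)"
    and "frobenius G br gm g0 gp M (quot_smod M K) (coset M K)"
    and "\<exists>v\<in>vcarrier M. coset M K v \<noteq> vzero (quot_smod M K)"
proof -
  interpret Q: supermodule_quotient G br g0 gp M K
    using maxK by unfold_locales (simp add: maximal_sub_smod_def)
  interpret N: supermodule G br g0 gp "quot_smod M K"
    by unfold_locales (simp_all add: Q.smod_quot csubspace_parts)
  have gp_kills: "coset M K (sact M x v) = vzero (quot_smod M K)" if x: "x \<in> gp" and v: "v \<in> vcarrier M" for x v
  proof -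
    have "sact M x v \<in> vcarrier M" using x v g0_gp_subset_ge(2) ge.sact_closed by blast
    then show ?thesis using gp_into_maximal[OF fd maxK x v] Q.coset_eq_K_iff by (simp add: Q.quot_simps)
  qed
  have "\<forall>x\<in>gp. \<forall>X\<in>vcarrier (quot_smod M K). sact (quot_smod M K) x X = vzero (quot_smod M K)"
  proof (intro ballI)
    fix x X assume x: "x \<in> gp" and "X \<in> vcarrier (quot_smod M K)"
    then obtain v where v: "v \<in> vcarrier M" "X = coset M K v" by (metis Q.quot_carrierE)
    then show "sact (quot_smod M K) x X = vzero (quot_smod M K)"
      using gp_kills[OF x v(1)] x g0_gp_subset_ge(2) Q.quot_sact_coset by blast
  qed
  then show simple: "simple_smod G br g0 {vzero G} (quot_smod M K)"
    using N.simple_smod_even_part Q.simple_smod_quot[OF maxK] by blast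
  show "frobenius G br gm g0 gp M (quot_smod M K) (coset M K)"
  proof unfold_locales
    show "smod G br g0 {vzero G} (quot_smod M K)" using simple unfolding simple_smod_def by blast
    show "smod_hom G g0 {vzero G} M (quot_smod M K) (coset M K)"
    proof (rule smod_hom_mono[OF ssum_mono Q.smod_hom_coset])
      show "{vzero G} \<subseteq> gp" using csubspaceD(2)[OF csubspace_parts(4)] by blast
    qed simp
  qed (rule gp_kills)
  show "\<exists>v\<in>vcarrier M. coset M K v \<noteq> vzero (quot_smod M K)"
    using maxK Q.coset_eq_K_iff Q.K_subset unfolding maximal_sub_smod_def by (auto simp: Q.quot_simps)
qed

theorem lemma4p2:
  fixes G :: "'g cvs" and br :: "'g \<Rightarrow> 'g \<Rightarrow> 'g" and gm g0 gp :: "'g set"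
    and M :: "('m, 'g) smod"
  assumes "zgraded_lsa G br gm g0 gp"
    and "fin_dim G (ssum G gm gp)"
    and "simple_smod G br g0 (ssum G gm gp) M"
  shows "\<exists>(N :: ('m set, 'g) smod) \<phi>.
           simple_smod G br g0 {vzero G} N \<and>
           smod_hom G g0 (ssum G gm gp) M (coind G br gm g0 gp N) \<phi> \<and>
           inj_on \<phi> (vcarrier M)"
proof -
  interpret zgraded_supermodule G br gm g0 gp M
    using assms(1,3) by unfold_locales (simp_all add: simple_smod_def)
  obtain K where K: "maximal_sub_smod G g0 gp M K"
    using exists_maximal_sub_smod_ge[OF assms(3,2)] .
  interpret frobenius G br gm g0 gp M "quot_smod M K" "coset M K"
    using quotient_by_maximal(2)[OF assms(2) K] .
  show ?thesis
    using quotient_by_maximal(1,3)[OF assms(2) K] frobenius_map_smod_hom frobenius_map_inj[OF assms(3)]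
    by blast
qed

end
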